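(* For an essentially profinite class $\mathcal{F}$ of simple graphs, the following are equivalent: (1) $\mathcal{F}$ is homomorphism distinguishing closed; (2) for every graph $K$, if $\vec{K}\in\mathrm{span}\{\vec{F}\in\mathbb{R}^{\Gamma(\mathcal{F}_K\cup\{K\})}\mid F\in\mathcal{F}_K\}$ then $K\in\mathcal{F}$; (3) $\mathcal{F}_K$ is homomorphism distinguishing closed for every graph $K$.
   Context: All graphs are finite, undirected, without multiple edges; simple means without loops. $\hom(F,G)$ counts homomorphisms; $G\equiv_{\mathcal{F}}H$ means $\hom(F,G)=\hom(F,H)$ for all $F\in\mathcal{F}$; $\mathrm{cl}(\mathcal{F})$ is the class of simple graphs $K$ such that for all simple $G,H$, $G\equiv_{\mathcal{F}}H$ implies $\hom(K,G)=\hom(K,H)$; $\mathcal{F}$ is homomorphism distinguishing closed if $\mathrm{cl}(\mathcal{F})=\mathcal{F}$. $\Gamma(F)$ is the set of isomorphism types of connected components of $F$, $\Gamma(\mathcal{F})=\bigcup_{F\in\mathcal{F}}\Gamma(F)$. $\mathcal{F}_K=\{F\in\mathcal{F}\mid\hom(F,K)>0\}$. $\mathcal{F}$ is essentially finite if $\Gamma(\mathcal{F})$ is finite, essentially profinite if $\mathcal{F}_K$ is essentially finite for all graphs $K$. For a finite set $\mathcal{C}$ of connected graphs and a graph $F$ with $\Gamma(F)\subseteq\mathcal{C}$, $\vec F\in\mathbb{R}^{\mathcal{C}}$ is the vector whose $C$-entry is the number of connected components of $F$ isomorphic to $C$. *)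

theory Defs
  imports Complex_Main "HOL-Library.FuncSet"
begin

text \<open>A (finite, undirected, possibly looped, no multi-edges) graph with vertices
  drawn from nat: a vertex set and a symmetric edge relation on it.
  A loop at v is the pair (v,v).\<close>
type_synonym graph = "nat set \<times> (nat \<times> nat) set"

definition verts :: "graph \<Rightarrow> nat set" where "verts G = fst G"
definition edges :: "graph \<Rightarrow> (nat \<times> nat) set" where "edges G = snd G"

definition is_graph :: "graph \<Rightarrow> bool" where
  "is_graph G \<longleftrightarrow> finite (verts G) \<and> edges G \<subseteq> verts G \<times> verts G \<and> sym (edges G)"

definition simple_graph :: "graph \<Rightarrow> bool" where
  "simple_graph G \<longleftrightarrow> is_graph G \<and> (\<forall>v. (v, v) \<notin> edges G)"

definition homs :: "graph \<Rightarrow> graph \<Rightarrow> (nat \<Rightarrow> nat) set" where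
  "homs F G = {h \<in> verts F \<rightarrow>\<^sub>E verts G. \<forall>(u, v) \<in> edges F. (h u, h v) \<in> edges G}"

definition hom :: "graph \<Rightarrow> graph \<Rightarrow> nat" where
  "hom F G = card (homs F G)"

definition iso :: "graph \<Rightarrow> graph \<Rightarrow> bool" where
  "iso F G \<longleftrightarrow> (\<exists>f. bij_betw f (verts F) (verts G) \<and>
     (\<forall>u\<in>verts F. \<forall>v\<in>verts F. (u, v) \<in> edges F \<longleftrightarrow> (f u, f v) \<in> edges G))"

definition iso_type :: "graph \<Rightarrow> graph set" where
  "iso_type G = {H. is_graph H \<and> iso H G}"

definition iso_closed :: "graph set \<Rightarrow> bool" where
  "iso_closed \<F> \<longleftrightarrow> (\<forall>F\<in>\<F>. \<forall>G. is_graph G \<and> iso G F \<longrightarrow> G \<in> \<F>)"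

definition induced :: "graph \<Rightarrow> nat set \<Rightarrow> graph" where
  "induced G S = (S, edges G \<inter> (S \<times> S))"

definition component_sets :: "graph \<Rightarrow> nat set set" where
  "component_sets G = (\<lambda>v. (edges G)\<^sup>* `` {v}) ` verts G"

definition components :: "graph \<Rightarrow> graph set" where
  "components G = induced G ` component_sets G"

definition Gamma :: "graph \<Rightarrow> graph set set" where
  "Gamma G = iso_type ` components G"

definition Gamma_class :: "graph set \<Rightarrow> graph set set" where
  "Gamma_class \<F> = (\<Union>F\<in>\<F>. Gamma F)"

definition comp_vec :: "graph \<Rightarrow> graph set \<Rightarrow> real" where
  "comp_vec G t = real (card {S \<in> component_sets G. iso_type (induced G S) = t})"

text \<open>v lies in the real span of the vectors in V, as vectors in R^C
  (only the coordinates in C are compared).\<close>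
definition in_span_on :: "'c set \<Rightarrow> ('c \<Rightarrow> real) set \<Rightarrow> ('c \<Rightarrow> real) \<Rightarrow> bool" where
  "in_span_on C V v \<longleftrightarrow> (\<exists>S c. finite S \<and> S \<subseteq> V \<and> (\<forall>t\<in>C. v t = (\<Sum>w\<in>S. c w * w t)))"

definition hom_equiv :: "graph set \<Rightarrow> graph \<Rightarrow> graph \<Rightarrow> bool" where
  "hom_equiv \<F> G H \<longleftrightarrow> (\<forall>F\<in>\<F>. hom F G = hom F H)"

definition hd_cl :: "graph set \<Rightarrow> graph set" where
  "hd_cl \<F> = {K. simple_graph K \<and> (\<forall>G H. simple_graph G \<longrightarrow> simple_graph H \<longrightarrow>
      hom_equiv \<F> G H \<longrightarrow> hom K G = hom K H)}"

definition hd_closed :: "graph set \<Rightarrow> bool" where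
  "hd_closed \<F> \<longleftrightarrow> hd_cl \<F> = \<F>"

definition restrict_to :: "graph set \<Rightarrow> graph \<Rightarrow> graph set" where
  "restrict_to \<F> K = {F \<in> \<F>. hom F K > 0}"

definition ess_finite :: "graph set \<Rightarrow> bool" where
  "ess_finite \<F> \<longleftrightarrow> finite (Gamma_class \<F>)"

definition ess_profinite :: "graph set \<Rightarrow> bool" where
  "ess_profinite \<F> \<longleftrightarrow> (\<forall>K. is_graph K \<longrightarrow> ess_finite (restrict_to \<F> K))"

end

theory Submission
  imports Defs "HOL-Library.Nat_Bijection" "HOL-Library.Function_Algebras"
begin

text \<open>
  Write \<open>c\<^sub>t(F)\<close> for the number of components of \<open>F\<close> of isomorphism type \<open>t\<close>. Counts of
  homomorphisms factor over components, \<open>hom(F, G) = \<Prod>\<^sub>t hom(t, G) ^ c\<^sub>t(F)\<close>, so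
  \<open>log hom(-, G)\<close> is linear in the component vector. If the vector of \<open>K\<close> is a linear
  combination of vectors of graphs in \<open>\<F>\<^sub>K\<close>, then \<open>hom(K, -)\<close> is therefore determined by
  the counts from \<open>\<F>\<^sub>K\<close>; so is the positivity of \<open>hom(K, G)\<close>, because every component of
  \<open>K\<close> is a component of some graph in \<open>\<F>\<^sub>K\<close>.

  Conversely, if the vector of \<open>K\<close> is outside that span (a question about finitely many
  coordinates, by essential profiniteness), an integral functional \<open>b\<close> vanishes on the vectors
  of \<open>\<F>\<^sub>K\<close> but not on that of \<open>K\<close>. Homomorphism counts from pairwise non-isomorphic
  graphs are linearly independent (count surjective homomorphisms by inclusion-exclusion), so
  disjoint unions realise, up to a common factor, every integer vector close to a fixed
  positive direction. Making \<open>hom(t, Y)\<close> and \<open>hom(t, Z)\<close> proportional to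
  \<open>(N+1)^p\<^sub>t N^(k-p\<^sub>t)\<close> and \<open>(N+1)^q\<^sub>t N^(k-q\<^sub>t)\<close> with \<open>p - q = b\<close> yields
  \<open>hom(F, Y) = hom(F, Z)\<close> exactly when \<open>b\<close> vanishes on the vector of \<open>F\<close>; the products
  \<open>Y \<times> K\<close> and \<open>Z \<times> K\<close> are then \<open>\<F>\<close>-equivalent but are told apart by \<open>K\<close>.

  Condition (3) follows by applying the equivalence of (1) and (2) to \<open>\<F>\<^sub>K\<close>, and it gives
  back (1) for \<open>K\<close> a single looped vertex, to which every graph maps.
\<close>

lemma is_graph_finite_verts: "is_graph G \<Longrightarrow> finite (verts G)"
  by (simp add: is_graph_def)

lemma is_graph_finite_edges: "is_graph G \<Longrightarrow> finite (edges G)"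
  unfolding is_graph_def by (auto intro: finite_subset)

lemma is_graph_edgeD: "is_graph G \<Longrightarrow> (u, v) \<in> edges G \<Longrightarrow> u \<in> verts G \<and> v \<in> verts G"
  by (auto simp: is_graph_def)

lemma is_graph_edge_sym: "is_graph G \<Longrightarrow> (u, v) \<in> edges G \<Longrightarrow> (v, u) \<in> edges G"
  by (auto simp: is_graph_def sym_def)

lemma simple_graph_is_graph: "simple_graph G \<Longrightarrow> is_graph G"
  by (simp add: simple_graph_def)

lemma homs_extensional: "h \<in> homs F G \<Longrightarrow> x \<notin> verts F \<Longrightarrow> h x = undefined"
  by (auto simp: homs_def PiE_def extensional_def)

lemma finite_homs: "is_graph F \<Longrightarrow> is_graph G \<Longrightarrow> finite (homs F G)"
  by (rule finite_subset[of _ "verts F \<rightarrow>\<^sub>E verts G"])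
    (auto simp: homs_def is_graph_finite_verts intro: finite_PiE)

lemma hom_pos_iff: "is_graph F \<Longrightarrow> is_graph G \<Longrightarrow> hom F G > 0 \<longleftrightarrow> homs F G \<noteq> {}"
  by (simp add: hom_def card_gt_0_iff finite_homs)

lemma restrict_id_in_homs: "is_graph G \<Longrightarrow> S \<subseteq> verts G \<Longrightarrow> restrict id S \<in> homs (induced G S) G"
  by (auto simp: homs_def induced_def verts_def edges_def)

lemma hom_comp_in_homs:
  assumes "is_graph A" "f \<in> homs A B" "g \<in> homs B C"
  shows "restrict (g \<circ> f) (verts A) \<in> homs A C"
  using assms by (fastforce simp: homs_def dest: is_graph_edgeD)

lemma hom_pos_trans:
  assumes "is_graph A" "is_graph B" "is_graph C" "hom A B > 0" "hom B C > 0"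
  shows "hom A C > 0"
  using assms hom_comp_in_homs hom_pos_iff by (metis ex_in_conv)

lemma induced_verts [simp]: "verts (induced G S) = S"
  and induced_edges [simp]: "edges (induced G S) = edges G \<inter> S \<times> S"
  by (simp_all add: induced_def verts_def edges_def)

lemma induced_all_verts: "is_graph G \<Longrightarrow> induced G (verts G) = G"
  by (cases G) (auto simp: induced_def verts_def edges_def is_graph_def)

lemma hom_self_pos: "is_graph G \<Longrightarrow> hom G G > 0"
  using restrict_id_in_homs[of G "verts G"] by (auto simp: induced_all_verts hom_pos_iff)

lemma iso_refl: "iso G G"
  unfolding iso_def by (rule exI[of _ id]) auto

lemma iso_sym: assumes "iso F G" shows "iso G F"
proof -
  obtain f where f: "bij_betw f (verts F) (verts G)"
    and e: "\<forall>u\<in>verts F. \<forall>v\<in>verts F. (u, v) \<in> edges F \<longleftrightarrow> (f u, f v) \<in> edges G"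
    using assms unfolding iso_def by blast
  let ?g = "inv_into (verts F) f"
  have g: "bij_betw ?g (verts G) (verts F)" using f by (rule bij_betw_inv_into)
  have "(u, v) \<in> edges G \<longleftrightarrow> (?g u, ?g v) \<in> edges F" if "u \<in> verts G" "v \<in> verts G" for u v
  proof -
    have "f (?g u) = u" "f (?g v) = v" "?g u \<in> verts F" "?g v \<in> verts F"
      using f g that by (auto simp: bij_betw_inv_into_right dest: bij_betwE)
    with e show ?thesis by metis
  qed
  with g show ?thesis unfolding iso_def by blast
qed

lemma iso_trans: assumes "iso F G" "iso G H" shows "iso F H"
proof -
  obtain f g where f: "bij_betw f (verts F) (verts G)" and g: "bij_betw g (verts G) (verts H)"
    and "\<forall>u\<in>verts F. \<forall>v\<in>verts F. (u, v) \<in> edges F \<longleftrightarrow> (f u, f v) \<in> edges G"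
    and "\<forall>u\<in>verts G. \<forall>v\<in>verts G. (u, v) \<in> edges G \<longleftrightarrow> (g u, g v) \<in> edges H"
    using assms unfolding iso_def by blast
  then have "\<forall>u\<in>verts F. \<forall>v\<in>verts F. (u, v) \<in> edges F \<longleftrightarrow> ((g \<circ> f) u, (g \<circ> f) v) \<in> edges H"
    by (auto dest: bij_betwE)
  with bij_betw_trans[OF f g] show ?thesis unfolding iso_def by blast
qed

lemma hom_le_if_iso:
  assumes "iso A B" "is_graph A" "is_graph G"
  shows "hom B G \<le> hom A G"
proof -
  obtain f where f: "bij_betw f (verts A) (verts B)"
    and e: "\<forall>u\<in>verts A. \<forall>v\<in>verts A. (u, v) \<in> edges A \<longleftrightarrow> (f u, f v) \<in> edges B"
    using assms unfolding iso_def by blast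
  have "restrict f (verts A) \<in> homs A B"
    using f e assms(2) by (auto simp: homs_def dest: bij_betwE is_graph_edgeD)
  then have into: "(\<lambda>h. restrict (h \<circ> restrict f (verts A)) (verts A)) ` homs B G \<subseteq> homs A G"
    using hom_comp_in_homs[OF assms(2)] by blast
  have "inj_on (\<lambda>h. restrict (h \<circ> restrict f (verts A)) (verts A)) (homs B G)"
  proof (rule inj_onI, rule ext)
    fix h1 h2 x
    assume h: "h1 \<in> homs B G" "h2 \<in> homs B G"
      and eq: "restrict (h1 \<circ> restrict f (verts A)) (verts A) = restrict (h2 \<circ> restrict f (verts A)) (verts A)"
    show "h1 x = h2 x"
    proof (cases "x \<in> verts B")
      case True
      then obtain a where "a \<in> verts A" "x = f a" using f by (auto simp: bij_betw_def)
      then show ?thesis using fun_cong[OF eq, of a] by simp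
    qed (metis h homs_extensional)
  qed
  with into show ?thesis
    unfolding hom_def by (intro card_inj_on_le) (auto intro: finite_homs assms)
qed

lemma hom_iso: "iso A B \<Longrightarrow> is_graph A \<Longrightarrow> is_graph B \<Longrightarrow> is_graph G \<Longrightarrow> hom A G = hom B G"
  using hom_le_if_iso iso_sym by (metis le_antisym)

lemma simple_graph_iso: "iso A B \<Longrightarrow> simple_graph B \<Longrightarrow> is_graph A \<Longrightarrow> simple_graph A"
  unfolding iso_def simple_graph_def by (blast dest: is_graph_edgeD)

lemma iso_type_eq: "iso X Y \<Longrightarrow> iso_type X = iso_type Y"
  unfolding iso_type_def using iso_trans iso_sym by blast

lemma iso_type_self: "is_graph X \<Longrightarrow> X \<in> iso_type X"
  by (simp add: iso_type_def iso_refl)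

lemma mem_iso_typeD: "H \<in> iso_type X \<Longrightarrow> is_graph H \<and> iso H X"
  by (simp add: iso_type_def)

section \<open>Connected components\<close>

definition comp_of :: "graph \<Rightarrow> nat \<Rightarrow> nat set" where
  "comp_of G v = (edges G)\<^sup>* `` {v}"

definition connected_graph :: "graph \<Rightarrow> bool" where
  "connected_graph H \<longleftrightarrow> verts H \<noteq> {} \<and> (\<forall>u\<in>verts H. \<forall>v\<in>verts H. (u, v) \<in> (edges H)\<^sup>*)"

lemma component_sets_eq: "component_sets G = comp_of G ` verts G"
  by (simp add: component_sets_def comp_of_def)

lemma finite_component_sets: "is_graph G \<Longrightarrow> finite (component_sets G)"
  by (simp add: component_sets_eq is_graph_finite_verts)

lemma comp_of_self: "v \<in> comp_of G v"
  by (simp add: comp_of_def)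

lemma comp_of_edge_closed: "u \<in> comp_of G v \<Longrightarrow> (u, w) \<in> edges G \<Longrightarrow> w \<in> comp_of G v"
  by (auto simp: comp_of_def intro: rtrancl_into_rtrancl)

lemma comp_of_subset: "is_graph G \<Longrightarrow> v \<in> verts G \<Longrightarrow> comp_of G v \<subseteq> verts G"
proof
  fix w assume "is_graph G" "v \<in> verts G" "w \<in> comp_of G v"
  then show "w \<in> verts G"
    unfolding comp_of_def by (auto elim: rtrancl_induct dest: is_graph_edgeD)
qed

lemma comp_of_eq: assumes "is_graph G" "u \<in> comp_of G v" shows "comp_of G u = comp_of G v"
proof -
  have "sym ((edges G)\<^sup>*)" using assms(1) by (simp add: is_graph_def sym_rtrancl)
  then have "(u, v) \<in> (edges G)\<^sup>*" "(v, u) \<in> (edges G)\<^sup>*"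
    using assms(2) by (auto simp: comp_of_def dest: symD)
  then show ?thesis unfolding comp_of_def by (auto intro: rtrancl_trans)
qed

lemma component_set_eq_comp_of:
  "is_graph G \<Longrightarrow> S \<in> component_sets G \<Longrightarrow> v \<in> S \<Longrightarrow> S = comp_of G v"
  by (auto simp: component_sets_eq dest: comp_of_eq)

lemma component_set_subset: "is_graph G \<Longrightarrow> S \<in> component_sets G \<Longrightarrow> S \<subseteq> verts G"
  by (auto simp: component_sets_eq dest: comp_of_subset)

lemma induced_is_graph: "is_graph G \<Longrightarrow> S \<subseteq> verts G \<Longrightarrow> is_graph (induced G S)"
  unfolding is_graph_def by (auto simp: sym_def intro: finite_subset)

lemma induced_simple: "simple_graph G \<Longrightarrow> S \<subseteq> verts G \<Longrightarrow> simple_graph (induced G S)"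
  using induced_is_graph by (auto simp: simple_graph_def)

lemma component_is_graph: "is_graph G \<Longrightarrow> S \<in> component_sets G \<Longrightarrow> is_graph (induced G S)"
  by (simp add: component_set_subset induced_is_graph)

lemma component_connected:
  assumes G: "is_graph G" and S: "S \<in> component_sets G"
  shows "connected_graph (induced G S)"
proof -
  obtain c where c: "c \<in> verts G" "S = comp_of G c" using S by (auto simp: component_sets_eq)
  let ?E = "edges G \<inter> S \<times> S"
  have from_c: "(c, x) \<in> ?E\<^sup>*" if "(c, x) \<in> (edges G)\<^sup>*" for x
    using that
  proof (induction rule: rtrancl_induct)
    case (step y z)
    then have "y \<in> S" "z \<in> S" using c by (auto simp: comp_of_def intro: rtrancl_into_rtrancl)
    with step show ?case by (auto intro: rtrancl_into_rtrancl)
  qed simp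
  have "sym (?E\<^sup>*)" using G by (intro sym_rtrancl) (auto simp: is_graph_def sym_def)
  then have "(u, v) \<in> ?E\<^sup>*" if "u \<in> S" "v \<in> S" for u v
    using from_c that c by (auto simp: comp_of_def intro: rtrancl_trans dest: symD)
  moreover have "c \<in> S" using c comp_of_self by simp
  ultimately show ?thesis unfolding connected_graph_def by auto
qed

lemma glue_component_homs:
  assumes F: "is_graph F" and \<phi>: "\<phi> \<in> (\<Pi>\<^sub>E S\<in>component_sets F. homs (induced F S) G)"
  shows "(\<lambda>v\<in>verts F. \<phi> (comp_of F v) v) \<in> homs F G"
  unfolding homs_def
proof (intro CollectI conjI)
  have hom_on: "\<phi> (comp_of F v) \<in> homs (induced F (comp_of F v)) G" if "v \<in> verts F" for v
    using \<phi> that by (auto simp: component_sets_eq)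
  have "\<phi> (comp_of F v) v \<in> verts G" if "v \<in> verts F" for v
    using hom_on[OF that] comp_of_self[of v F] by (auto simp: homs_def)
  then show "(\<lambda>v\<in>verts F. \<phi> (comp_of F v) v) \<in> verts F \<rightarrow>\<^sub>E verts G" by auto
  show "\<forall>(u, v)\<in>edges F. ((\<lambda>v\<in>verts F. \<phi> (comp_of F v) v) u, (\<lambda>v\<in>verts F. \<phi> (comp_of F v) v) v)
    \<in> edges G"
  proof clarify
    fix u v assume uv: "(u, v) \<in> edges F"
    then have u: "u \<in> verts F" and v: "v \<in> verts F" using is_graph_edgeD[OF F] by auto
    have vu: "v \<in> comp_of F u" using comp_of_edge_closed[OF comp_of_self uv] .
    then have "(u, v) \<in> edges (induced F (comp_of F u))" using uv comp_of_self[of u F] by simp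
    then have "(\<phi> (comp_of F u) u, \<phi> (comp_of F u) v) \<in> edges G"
      using hom_on[OF u] by (auto simp: homs_def)
    then show "((\<lambda>v\<in>verts F. \<phi> (comp_of F v) v) u, (\<lambda>v\<in>verts F. \<phi> (comp_of F v) v) v) \<in> edges G"
      using u v comp_of_eq[OF F vu] by simp
  qed
qed

lemma hom_eq_prod_components:
  assumes F: "is_graph F" and G: "is_graph G"
  shows "hom F G = (\<Prod>S\<in>component_sets F. hom (induced F S) G)"
proof -
  let ?CS = "component_sets F"
  let ?split = "\<lambda>h. \<lambda>S\<in>?CS. restrict h S"
  let ?glue = "\<lambda>\<phi>. \<lambda>v\<in>verts F. \<phi> (comp_of F v) v"
  have comp_in: "comp_of F v \<in> ?CS" if "v \<in> verts F" for v
    using that by (simp add: component_sets_eq)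
  have "bij_betw ?split (homs F G) (\<Pi>\<^sub>E S\<in>?CS. homs (induced F S) G)"
  proof (rule bij_betw_byWitness[where f' = ?glue])
    show "\<forall>h\<in>homs F G. ?glue (?split h) = h"
      using comp_in comp_of_self by (auto simp: fun_eq_iff homs_extensional)
    show "\<forall>\<phi>\<in>\<Pi>\<^sub>E S\<in>?CS. homs (induced F S) G. ?split (?glue \<phi>) = \<phi>"
    proof (intro ballI ext)
      fix \<phi> S v assume \<phi>: "\<phi> \<in> (\<Pi>\<^sub>E S\<in>?CS. homs (induced F S) G)"
      show "?split (?glue \<phi>) S v = \<phi> S v"
      proof (cases "S \<in> ?CS \<and> v \<in> S")
        case True
        then show ?thesis
          using component_set_eq_comp_of[OF F] component_set_subset[OF F] by auto
      next
        case outside: False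
        show ?thesis
        proof (cases "S \<in> ?CS")
          case True
          with outside have "v \<notin> S" by blast
          have "\<phi> S \<in> homs (induced F S) G" using \<phi> True by blast
          then have "\<phi> S v = undefined" using homs_extensional \<open>v \<notin> S\<close> by (metis induced_verts)
          with True \<open>v \<notin> S\<close> show ?thesis by simp
        next
          case False
          then have "\<phi> S = undefined" using \<phi> by (simp add: PiE_def extensional_def)
          with False show ?thesis by simp
        qed
      qed
    qed
    show "?split ` homs F G \<subseteq> (\<Pi>\<^sub>E S\<in>?CS. homs (induced F S) G)"
      using component_set_subset[OF F] by (fastforce simp: homs_def)
    show "?glue ` (\<Pi>\<^sub>E S\<in>?CS. homs (induced F S) G) \<subseteq> homs F G"
      using glue_component_homs[OF F] by blast
  qed
  then have "hom F G = card (\<Pi>\<^sub>E S\<in>?CS. homs (induced F S) G)"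
    unfolding hom_def by (rule bij_betw_same_card)
  also have "\<dots> = (\<Prod>S\<in>?CS. hom (induced F S) G)"
    unfolding hom_def by (rule card_PiE[OF finite_component_sets[OF F]])
  finally show ?thesis .
qed

section \<open>Isomorphism types of components\<close>

definition type_rep :: "graph set \<Rightarrow> graph" where
  "type_rep t = (SOME H. H \<in> t \<and> connected_graph H)"

definition comp_count :: "graph \<Rightarrow> graph set \<Rightarrow> nat" where
  "comp_count G t = card {S \<in> component_sets G. iso_type (induced G S) = t}"

lemma comp_vec_eq: "comp_vec G t = real (comp_count G t)"
  by (simp add: comp_vec_def comp_count_def)

lemma Gamma_eq: "Gamma G = (\<lambda>S. iso_type (induced G S)) ` component_sets G"
  by (simp add: Gamma_def components_def image_image)

lemma finite_Gamma: "is_graph G \<Longrightarrow> finite (Gamma G)"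
  by (simp add: Gamma_eq finite_component_sets)

lemma comp_count_eq_0: "t \<notin> Gamma G \<Longrightarrow> comp_count G t = 0"
  unfolding comp_count_def Gamma_eq by (metis (mono_tags, lifting) card.empty empty_Collect_eq image_eqI)

lemma comp_count_pos_iff: "is_graph G \<Longrightarrow> 0 < comp_count G t \<longleftrightarrow> t \<in> Gamma G"
  by (auto simp: comp_count_def Gamma_eq card_gt_0_iff finite_component_sets)

lemma type_rep_component:
  assumes "is_graph G" "S \<in> component_sets G" and t: "t = iso_type (induced G S)"
  shows "is_graph (type_rep t) \<and> connected_graph (type_rep t) \<and> iso (type_rep t) (induced G S)"
proof -
  have "induced G S \<in> t \<and> connected_graph (induced G S)"
    using assms iso_type_self component_is_graph component_connected by blast
  then have "type_rep t \<in> t \<and> connected_graph (type_rep t)"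
    unfolding type_rep_def by (rule someI)
  then show ?thesis using t mem_iso_typeD by blast
qed

lemma Gamma_type_rep:
  assumes G: "is_graph G" and t: "t \<in> Gamma G"
  shows "is_graph (type_rep t) \<and> connected_graph (type_rep t) \<and> iso_type (type_rep t) = t
    \<and> 0 < hom (type_rep t) G"
proof -
  obtain S where S: "S \<in> component_sets G" "t = iso_type (induced G S)"
    using t by (auto simp: Gamma_eq)
  note rep = type_rep_component[OF G S]
  have "0 < hom (induced G S) G"
    using restrict_id_in_homs[OF G] component_set_subset[OF G S(1)]
    by (auto simp: hom_pos_iff G component_is_graph[OF G S(1)])
  then show ?thesis
    using rep S(2) hom_iso component_is_graph[OF G S(1)] G iso_type_eq by metis
qed

lemma Gamma_type_rep_simple:
  assumes G: "simple_graph G" and t: "t \<in> Gamma G"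
  shows "simple_graph (type_rep t)"
proof -
  obtain S where S: "S \<in> component_sets G" "t = iso_type (induced G S)"
    using t by (auto simp: Gamma_eq)
  have "simple_graph (induced G S)"
    using induced_simple[OF G] component_set_subset[OF simple_graph_is_graph[OF G] S(1)] .
  then show ?thesis
    using type_rep_component[OF simple_graph_is_graph[OF G] S] simple_graph_iso by blast
qed

lemma hom_eq_prod_types:
  assumes F: "is_graph F" and G: "is_graph G" and T: "finite T" "Gamma F \<subseteq> T"
  shows "hom F G = (\<Prod>t\<in>T. hom (type_rep t) G ^ comp_count F t)"
proof -
  let ?type = "\<lambda>S. iso_type (induced F S)"
  have "hom F G = (\<Prod>S\<in>component_sets F. hom (induced F S) G)"
    by (rule hom_eq_prod_components[OF F G])
  also have "\<dots> = (\<Prod>t\<in>T. \<Prod>S\<in>{S \<in> component_sets F. ?type S = t}. hom (induced F S) G)"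
    using T by (intro prod.group[symmetric] finite_component_sets F) (auto simp: Gamma_eq)
  also have "\<dots> = (\<Prod>t\<in>T. \<Prod>S\<in>{S \<in> component_sets F. ?type S = t}. hom (type_rep t) G)"
    using type_rep_component[OF F] component_is_graph[OF F] hom_iso G
    by (intro prod.cong refl) (metis (mono_tags, lifting) mem_Collect_eq)
  also have "\<dots> = (\<Prod>t\<in>T. hom (type_rep t) G ^ comp_count F t)"
    by (simp add: comp_count_def)
  finally show ?thesis .
qed

lemma hom_pos_iff_type_reps:
  assumes K: "is_graph K" and X: "is_graph X"
  shows "0 < hom K X \<longleftrightarrow> (\<forall>t\<in>Gamma K. 0 < hom (type_rep t) X)"
proof
  assume "0 < hom K X"
  then show "\<forall>t\<in>Gamma K. 0 < hom (type_rep t) X"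
    using Gamma_type_rep[OF K] hom_pos_trans K X by blast
next
  assume "\<forall>t\<in>Gamma K. 0 < hom (type_rep t) X"
  then show "0 < hom K X"
    using hom_eq_prod_types[OF K X finite_Gamma[OF K] order_refl] by (simp add: prod_pos)
qed

lemma ln_hom_eq_sum:
  assumes "is_graph F" "is_graph X" "finite T" "Gamma F \<subseteq> T" "\<forall>t\<in>T. 0 < hom (type_rep t) X"
  shows "ln (hom F X) = (\<Sum>t\<in>T. comp_count F t * ln (hom (type_rep t) X))"
proof -
  have "ln (hom F X) = ln (\<Prod>t\<in>T. real (hom (type_rep t) X) ^ comp_count F t)"
    using hom_eq_prod_types[OF assms(1-4)] by simp
  also have "\<dots> = (\<Sum>t\<in>T. comp_count F t * ln (hom (type_rep t) X))"
    using assms(3,5) by (simp add: ln_prod ln_realpow)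
  finally show ?thesis .
qed

section \<open>Linear combinations of component vectors\<close>

definition comp_span :: "graph set \<Rightarrow> graph \<Rightarrow> bool" where
  "comp_span \<X> K \<longleftrightarrow>
     (\<exists>Y c. finite Y \<and> Y \<subseteq> \<X> \<and> (\<forall>t. comp_vec K t = (\<Sum>F\<in>Y. c F * comp_vec F t)))"

lemma in_span_on_Gamma_class_iff:
  "in_span_on (Gamma_class (\<X> \<union> {K})) (comp_vec ` \<X>) (comp_vec K) \<longleftrightarrow> comp_span \<X> K"
proof
  let ?C = "Gamma_class (\<X> \<union> {K})"
  assume "in_span_on ?C (comp_vec ` \<X>) (comp_vec K)"
  then obtain S c where S: "finite S" "S \<subseteq> comp_vec ` \<X>"
    and on_C: "\<forall>t\<in>?C. comp_vec K t = (\<Sum>w\<in>S. c w * w t)"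
    unfolding in_span_on_def by blast
  then obtain Y where Y: "Y \<subseteq> \<X>" "inj_on comp_vec Y" "S = comp_vec ` Y"
    by (auto simp: subset_image_inj)
  have "comp_vec K t = (\<Sum>F\<in>Y. c (comp_vec F) * comp_vec F t)" for t
  proof (cases "t \<in> ?C")
    case True
    then show ?thesis using on_C Y by (simp add: sum.reindex)
  next
    case False
    then have "t \<notin> Gamma K" "\<forall>F\<in>Y. t \<notin> Gamma F" using Y(1) by (auto simp: Gamma_class_def)
    then show ?thesis by (simp add: comp_vec_eq comp_count_eq_0)
  qed
  moreover have "finite Y" using S(1) Y by (simp add: finite_image_iff)
  ultimately show "comp_span \<X> K"
    unfolding comp_span_def using Y(1) by (intro exI[of _ Y] exI[of _ "c \<circ> comp_vec"]) simp
next
  assume "comp_span \<X> K"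
  then obtain Y c where Y: "finite Y" "Y \<subseteq> \<X>"
    and eq: "\<forall>t. comp_vec K t = (\<Sum>F\<in>Y. c F * comp_vec F t)"
    unfolding comp_span_def by blast
  let ?c = "\<lambda>w. \<Sum>F\<in>{F \<in> Y. comp_vec F = w}. c F"
  have "comp_vec K t = (\<Sum>w\<in>comp_vec ` Y. ?c w * w t)" for t
  proof -
    have "(\<Sum>w\<in>comp_vec ` Y. ?c w * w t)
        = (\<Sum>w\<in>comp_vec ` Y. \<Sum>F\<in>{F \<in> Y. comp_vec F = w}. c F * comp_vec F t)"
      by (auto simp: sum_distrib_right intro!: sum.cong)
    also have "\<dots> = (\<Sum>F\<in>Y. c F * comp_vec F t)"
      using sum.image_gen[OF Y(1), of "\<lambda>F. c F * comp_vec F t" comp_vec] by simp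
    finally show ?thesis using eq by simp
  qed
  then show "in_span_on (Gamma_class (\<X> \<union> {K})) (comp_vec ` \<X>) (comp_vec K)"
    unfolding in_span_on_def using Y
    by (intro exI[of _ "comp_vec ` Y"] exI[of _ ?c]) auto
qed

lemma comp_span_Gamma_subset:
  assumes K: "is_graph K" and span: "comp_span \<X> K"
  shows "Gamma K \<subseteq> Gamma_class \<X>"
proof
  fix t assume t: "t \<in> Gamma K"
  obtain Y c where "Y \<subseteq> \<X>" and eq: "comp_vec K t = (\<Sum>F\<in>Y. c F * comp_vec F t)"
    using span unfolding comp_span_def by blast
  moreover have "comp_vec K t \<noteq> 0" using t comp_count_pos_iff[OF K] by (simp add: comp_vec_eq)
  ultimately obtain F where "F \<in> \<X>" "comp_vec F t \<noteq> 0"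
    by (metis (no_types, lifting) mult_zero_right subsetD sum.neutral)
  moreover from this have "t \<in> Gamma F" by (metis comp_count_eq_0 comp_vec_eq of_nat_0)
  ultimately show "t \<in> Gamma_class \<X>" unfolding Gamma_class_def by blast
qed

lemma simple_if_Gamma_subset:
  assumes simple: "\<forall>F\<in>\<X>. simple_graph F" and K: "is_graph K" and sub: "Gamma K \<subseteq> Gamma_class \<X>"
  shows "simple_graph K"
proof -
  have "(v, v) \<notin> edges K" for v
  proof
    assume loop: "(v, v) \<in> edges K"
    then have "v \<in> verts K" using is_graph_edgeD[OF K] by blast
    then have S: "comp_of K v \<in> component_sets K" by (simp add: component_sets_eq)
    let ?t = "iso_type (induced K (comp_of K v))"
    have "?t \<in> Gamma_class \<X>" using sub S by (auto simp: Gamma_eq)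
    then have "simple_graph (type_rep ?t)"
      using simple Gamma_type_rep_simple by (auto simp: Gamma_class_def)
    then have "simple_graph (induced K (comp_of K v))"
      using type_rep_component[OF K S refl] component_is_graph[OF K S] iso_sym simple_graph_iso
      by blast
    moreover have "(v, v) \<in> edges (induced K (comp_of K v))" using loop comp_of_self by simp
    ultimately show False unfolding simple_graph_def by blast
  qed
  then show ?thesis using K by (simp add: simple_graph_def)
qed

lemma hom_pos_if_Gamma_subset:
  assumes K: "is_graph K" and X: "is_graph X" and sub: "Gamma K \<subseteq> Gamma_class \<X>"
    and pos: "\<forall>F\<in>\<X>. is_graph F \<and> 0 < hom F X"
  shows "0 < hom K X"
  unfolding hom_pos_iff_type_reps[OF K X]
proof
  fix t assume "t \<in> Gamma K"
  then obtain F where "F \<in> \<X>" "t \<in> Gamma F" using sub by (auto simp: Gamma_class_def)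
  then show "0 < hom (type_rep t) X" using pos Gamma_type_rep hom_pos_trans X by blast
qed

lemma ln_hom_eq_lin_comb:
  assumes K: "is_graph K" and X: "is_graph X" and "0 < hom K X"
    and Y: "finite Y" "\<forall>F\<in>Y. is_graph F \<and> 0 < hom F X"
    and comb: "\<forall>t. comp_vec K t = (\<Sum>F\<in>Y. c F * comp_vec F t)"
  shows "ln (hom K X) = (\<Sum>F\<in>Y. c F * ln (hom F X))"
proof -
  let ?T = "Gamma K \<union> (\<Union>F\<in>Y. Gamma F)"
  let ?l = "\<lambda>t. ln (hom (type_rep t) X)"
  have T: "finite ?T" using K Y by (simp add: finite_Gamma)
  have pos: "\<forall>t\<in>?T. 0 < hom (type_rep t) X"
    using assms hom_pos_iff_type_reps[OF _ X] by blast
  have "ln (hom K X) = (\<Sum>t\<in>?T. comp_count K t * ?l t)"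
    using ln_hom_eq_sum[OF K X T _ pos] by blast
  also have "\<dots> = (\<Sum>t\<in>?T. (\<Sum>F\<in>Y. c F * comp_count F t) * ?l t)"
    using comb by (simp add: comp_vec_eq)
  also have "\<dots> = (\<Sum>F\<in>Y. c F * (\<Sum>t\<in>?T. comp_count F t * ?l t))"
    by (simp add: sum_distrib_left sum_distrib_right mult.assoc sum.swap[of _ ?T])
  also have "\<dots> = (\<Sum>F\<in>Y. c F * ln (hom F X))"
  proof (rule sum.cong[OF refl])
    fix F assume "F \<in> Y"
    then have "is_graph F" "Gamma F \<subseteq> ?T" using Y by auto
    then show "c F * (\<Sum>t\<in>?T. comp_count F t * ?l t) = c F * ln (hom F X)"
      using ln_hom_eq_sum[OF _ X T _ pos] by simp
  qed
  finally show ?thesis .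
qed

lemma comp_span_imp_hd_cl:
  assumes simple: "\<forall>F\<in>\<F>. simple_graph F" and K: "is_graph K"
    and span: "comp_span (restrict_to \<F> K) K"
  shows "K \<in> hd_cl \<F>"
proof -
  let ?FK = "restrict_to \<F> K"
  have FK: "\<forall>F\<in>?FK. is_graph F \<and> 0 < hom F K"
    using simple by (simp add: restrict_to_def simple_graph_is_graph)
  have sub: "Gamma K \<subseteq> Gamma_class ?FK" by (rule comp_span_Gamma_subset[OF K span])
  obtain Y c where Y: "finite Y" "Y \<subseteq> ?FK"
    and comb: "\<forall>t. comp_vec K t = (\<Sum>F\<in>Y. c F * comp_vec F t)"
    using span unfolding comp_span_def by blast
  have pos_iff: "0 < hom K X \<longleftrightarrow> (\<forall>F\<in>?FK. 0 < hom F X)" if X: "is_graph X" for X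
    using FK hom_pos_trans[OF _ K X] hom_pos_if_Gamma_subset[OF K X sub] by blast
  have "hom K G = hom K H"
    if G: "simple_graph G" and H: "simple_graph H" and eqv: "hom_equiv \<F> G H" for G H
  proof -
    have G': "is_graph G" and H': "is_graph H" using G H by (simp_all add: simple_graph_is_graph)
    have eq_FK: "\<forall>F\<in>?FK. hom F G = hom F H" using eqv by (simp add: hom_equiv_def restrict_to_def)
    show ?thesis
    proof (cases "0 < hom K G")
      case True
      then have "0 < hom K H" using pos_iff[OF G'] pos_iff[OF H'] eq_FK by simp
      have "\<forall>F\<in>Y. is_graph F \<and> 0 < hom F G" "\<forall>F\<in>Y. is_graph F \<and> 0 < hom F H"
        using Y(2) FK pos_iff[OF G'] pos_iff[OF H'] True \<open>0 < hom K H\<close> by blast+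
      then have "ln (hom K G) = (\<Sum>F\<in>Y. c F * ln (hom F G))"
        "ln (hom K H) = (\<Sum>F\<in>Y. c F * ln (hom F H))"
        using ln_hom_eq_lin_comb[OF K G' True Y(1) _ comb]
          ln_hom_eq_lin_comb[OF K H' \<open>0 < hom K H\<close> Y(1) _ comb] by blast+
      moreover have "(\<Sum>F\<in>Y. c F * ln (hom F G)) = (\<Sum>F\<in>Y. c F * ln (hom F H))"
        using Y(2) eq_FK by (intro sum.cong) auto
      ultimately have "ln (hom K G) = ln (hom K H)" by simp
      then show ?thesis using True \<open>0 < hom K H\<close> by simp
    next
      case False
      then have "\<not> 0 < hom K H" using pos_iff[OF G'] pos_iff[OF H'] eq_FK by simp
      with False show ?thesis by simp
    qed
  qed
  moreover have "simple_graph K" using simple_if_Gamma_subset[OF _ K sub] simple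
    by (simp add: restrict_to_def)
  ultimately show ?thesis unfolding hd_cl_def by blast
qed

section \<open>Linear independence of homomorphism counts\<close>

definition graph_elements :: "graph \<Rightarrow> (nat + nat \<times> nat) set" where
  "graph_elements X = Inl ` verts X \<union> Inr ` edges X"

definition hom_image :: "(nat \<Rightarrow> nat) \<Rightarrow> graph \<Rightarrow> (nat + nat \<times> nat) set" where
  "hom_image h F = Inl ` h ` verts F \<union> Inr ` (\<lambda>(u, v). (h u, h v)) ` edges F"

definition delete_elements :: "graph \<Rightarrow> (nat + nat \<times> nat) set \<Rightarrow> graph" where
  "delete_elements X U = (verts X - {v. Inl v \<in> U},
     {(a, b) \<in> edges X. Inl a \<notin> U \<and> Inl b \<notin> U \<and> Inr (a, b) \<notin> U \<and> Inr (b, a) \<notin> U})"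

definition surj_homs :: "graph \<Rightarrow> graph \<Rightarrow> (nat \<Rightarrow> nat) set" where
  "surj_homs F X = {h \<in> homs F X. graph_elements X \<subseteq> hom_image h F}"

lemma finite_graph_elements: "is_graph X \<Longrightarrow> finite (graph_elements X)"
  by (simp add: graph_elements_def is_graph_finite_verts is_graph_finite_edges)

lemma delete_elements_simple: "simple_graph X \<Longrightarrow> simple_graph (delete_elements X U)"
  unfolding simple_graph_def is_graph_def delete_elements_def verts_def edges_def sym_def
  by (auto intro: finite_subset)

lemma homs_delete_elements:
  assumes F: "is_graph F"
  shows "homs F (delete_elements X U) = {h \<in> homs F X. U \<inter> hom_image h F = {}}"
proof (intro set_eqI iffI)
  fix h assume "h \<in> homs F (delete_elements X U)"
  then show "h \<in> {h \<in> homs F X. U \<inter> hom_image h F = {}}"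
    by (auto simp: homs_def hom_image_def delete_elements_def verts_def edges_def PiE_def Pi_def)
next
  fix h assume h: "h \<in> {h \<in> homs F X. U \<inter> hom_image h F = {}}"
  have "(h u, h v) \<in> edges (delete_elements X U)" if uv: "(u, v) \<in> edges F" for u v
  proof -
    have "(v, u) \<in> edges F" "u \<in> verts F" "v \<in> verts F"
      using uv is_graph_edge_sym[OF F] is_graph_edgeD[OF F] by auto
    with uv h show ?thesis
      by (auto simp: homs_def hom_image_def delete_elements_def verts_def edges_def) force+
  qed
  with h show "h \<in> homs F (delete_elements X U)"
    by (auto simp: homs_def hom_image_def delete_elements_def verts_def edges_def PiE_def Pi_def)
qed

lemma sum_Pow_alternating:
  assumes "finite A"
  shows "(\<Sum>U\<in>Pow A. (-1) ^ card U) = (of_bool (A = {}) :: 'a::comm_ring_1)"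
proof (cases "A = {}")
  case False
  then have "{} \<subset> A" by blast
  from card_subsupersets_even_odd[OF assms this]
  have "card {U. U \<in> Pow A \<and> even (card U)} = card {U. U \<in> Pow A \<and> odd (card U)}" by simp
  from sum_alternating_cancels[OF _ this] assms False show ?thesis by simp
qed simp

lemma card_surj_homs_inclusion_exclusion:
  assumes F: "is_graph F" and X: "is_graph X"
  shows "of_nat (card (surj_homs F X))
    = (\<Sum>U\<in>Pow (graph_elements X). (-1) ^ card U * of_nat (hom F (delete_elements X U)) :: 'a::comm_ring_1)"
proof -
  let ?H = "homs F X"
  let ?missing = "\<lambda>h. graph_elements X - hom_image h F"
  have H: "finite ?H" using F X by (rule finite_homs)
  have E: "finite (graph_elements X)" using X by (rule finite_graph_elements)
  have "(\<Sum>U\<in>Pow (graph_elements X). (-1) ^ card U * of_nat (hom F (delete_elements X U)))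
      = (\<Sum>U\<in>Pow (graph_elements X). \<Sum>h\<in>?H. (-1) ^ card U * of_bool (U \<subseteq> ?missing h) :: 'a)"
  proof (rule sum.cong[OF refl])
    fix U assume "U \<in> Pow (graph_elements X)"
    then have "homs F (delete_elements X U) = ?H \<inter> {h. U \<subseteq> ?missing h}"
      unfolding homs_delete_elements[OF F] by blast
    then show "(-1) ^ card U * of_nat (hom F (delete_elements X U))
        = (\<Sum>h\<in>?H. (-1) ^ card U * of_bool (U \<subseteq> ?missing h))"
      using H by (simp add: hom_def flip: sum_distrib_left)
  qed
  also have "\<dots> = (\<Sum>h\<in>?H. \<Sum>U\<in>Pow (graph_elements X). (-1) ^ card U * of_bool (U \<subseteq> ?missing h))"
    by (rule sum.swap)
  also have "\<dots> = (\<Sum>h\<in>?H. \<Sum>U\<in>Pow (?missing h). (-1) ^ card U)"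
  proof -
    have "Pow (graph_elements X) \<inter> {U. U \<subseteq> ?missing h} = Pow (?missing h)" for h by blast
    then show ?thesis using E by simp
  qed
  also have "\<dots> = (\<Sum>h\<in>?H. of_bool (?missing h = {}))"
    using E by (intro sum.cong refl sum_Pow_alternating) simp
  also have "\<dots> = of_nat (card (surj_homs F X))"
    using H by (simp add: surj_homs_def Int_def)
  finally show ?thesis by simp
qed

lemma surj_hom_card_le_iso:
  assumes F: "is_graph F" and X: "is_graph X" and h: "h \<in> surj_homs F X"
  shows "card (verts X) \<le> card (verts F) \<and> card (edges X) \<le> card (edges F)
    \<and> (card (verts F) + card (edges F) \<le> card (verts X) + card (edges X) \<longrightarrow> iso F X)"
proof -
  let ?e = "\<lambda>(u, v). (h u, h v)"
  have hom: "h \<in> homs F X" and onto: "graph_elements X \<subseteq> hom_image h F"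
    using h by (auto simp: surj_homs_def)
  have im: "h ` verts F = verts X" "edges X \<subseteq> ?e ` edges F"
    using hom onto by (auto simp: homs_def graph_elements_def hom_image_def)
  have cv: "card (verts X) \<le> card (verts F)"
    using im(1) card_image_le[OF is_graph_finite_verts[OF F]] by metis
  have ce: "card (edges X) \<le> card (edges F)"
    using card_mono[OF finite_imageI[OF is_graph_finite_edges[OF F]] im(2)]
      card_image_le[OF is_graph_finite_edges[OF F], of ?e] by linarith
  have "iso F X" if le: "card (verts F) + card (edges F) \<le> card (verts X) + card (edges X)"
  proof -
    have "card (verts X) = card (verts F)" using cv ce le by linarith
    then have "card (h ` verts F) = card (verts F)" using im(1) by simp
    then have inj: "inj_on h (verts F)"
      using eq_card_imp_inj_on[OF is_graph_finite_verts[OF F]] by blast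
    have "(u, v) \<in> edges F \<longleftrightarrow> (h u, h v) \<in> edges X" if "u \<in> verts F" "v \<in> verts F" for u v
    proof
      assume "(h u, h v) \<in> edges X"
      then obtain u' v' where "(u', v') \<in> edges F" "h u' = h u" "h v' = h v" using im(2) by auto
      moreover from this have "u' = u" "v' = v"
        using inj that is_graph_edgeD[OF F] by (auto dest: inj_onD)
      ultimately show "(u, v) \<in> edges F" by simp
    qed (use hom in \<open>auto simp: homs_def\<close>)
    with inj im(1) show ?thesis unfolding iso_def bij_betw_def by blast
  qed
  with cv ce show ?thesis by blast
qed

lemma restrict_id_in_surj_homs: "is_graph X \<Longrightarrow> restrict id (verts X) \<in> surj_homs X X"
  by (force simp: surj_homs_def homs_def graph_elements_def hom_image_def dest: is_graph_edgeD)

lemma sum_surj_homs_eq_0: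
  fixes \<alpha> :: "'i \<Rightarrow> 'a::comm_ring_1"
  assumes graphs: "\<forall>t\<in>T. is_graph (R t)" and X: "simple_graph X"
    and zero: "\<forall>G. simple_graph G \<longrightarrow> (\<Sum>t\<in>T. \<alpha> t * of_nat (hom (R t) G)) = 0"
  shows "(\<Sum>t\<in>T. \<alpha> t * of_nat (card (surj_homs (R t) X))) = 0"
proof -
  have "(\<Sum>t\<in>T. \<alpha> t * of_nat (card (surj_homs (R t) X)))
      = (\<Sum>t\<in>T. \<Sum>U\<in>Pow (graph_elements X).
           \<alpha> t * ((-1) ^ card U * of_nat (hom (R t) (delete_elements X U))))"
    using graphs simple_graph_is_graph[OF X] by (intro sum.cong refl)
      (simp add: card_surj_homs_inclusion_exclusion sum_distrib_left)
  also have "\<dots> = (\<Sum>U\<in>Pow (graph_elements X). (-1) ^ card U *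
           (\<Sum>t\<in>T. \<alpha> t * of_nat (hom (R t) (delete_elements X U))))"
    by (subst sum.swap) (simp add: sum_distrib_left mult.left_commute)
  also have "\<dots> = 0"
  proof -
    have "(\<Sum>t\<in>T. \<alpha> t * of_nat (hom (R t) (delete_elements X U))) = 0" for U
      using zero delete_elements_simple[OF X] by blast
    then show ?thesis by simp
  qed
  finally show ?thesis .
qed

lemma hom_functions_independent:
  fixes \<alpha> :: "'i \<Rightarrow> 'a::field_char_0"
  assumes T: "finite T" and simple: "\<forall>t\<in>T. simple_graph (R t)"
    and distinct: "\<forall>s\<in>T. \<forall>t\<in>T. iso (R s) (R t) \<longrightarrow> s = t"
    and zero: "\<forall>G. simple_graph G \<longrightarrow> (\<Sum>t\<in>T. \<alpha> t * of_nat (hom (R t) G)) = 0"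
  shows "\<forall>t\<in>T. \<alpha> t = 0"
proof (rule ccontr)
  let ?size = "\<lambda>t. card (verts (R t)) + card (edges (R t))"
  let ?A = "{t\<in>T. \<alpha> t \<noteq> 0}"
  assume "\<not> (\<forall>t\<in>T. \<alpha> t = 0)"
  then have A: "finite ?A" "?A \<noteq> {}" using T by auto
  then have "Max (?size ` ?A) \<in> ?size ` ?A" by simp
  then obtain t0 where t0: "t0 \<in> ?A" "?size t0 = Max (?size ` ?A)" by force
  then have max: "?size t \<le> ?size t0" if "t \<in> ?A" for t
    using A that by simp
  let ?X = "R t0"
  have graphs: "\<forall>t\<in>T. is_graph (R t)" using simple simple_graph_is_graph by blast
  then have X: "is_graph ?X" using t0 by blast
  \<comment> \<open>Of the \<open>R t\<close> with nonzero coefficient, only \<open>R t0\<close>, of maximal size, maps onto \<open>R t0\<close>.\<close>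
  have others: "\<alpha> t * of_nat (card (surj_homs (R t) ?X)) = 0" if t: "t \<in> T - {t0}" for t
  proof (cases "\<alpha> t = 0")
    case False
    have "surj_homs (R t) ?X = {}"
    proof (rule ccontr)
      assume "surj_homs (R t) ?X \<noteq> {}"
      then have "iso (R t) ?X"
        using surj_hom_card_le_iso[OF _ X] graphs max[of t] t False by fastforce
      with distinct t t0 show False by blast
    qed
    then show ?thesis by simp
  qed simp
  have "(\<Sum>t\<in>T. \<alpha> t * of_nat (card (surj_homs (R t) ?X)))
      = \<alpha> t0 * of_nat (card (surj_homs ?X ?X)) + (\<Sum>t\<in>T - {t0}. \<alpha> t * of_nat (card (surj_homs (R t) ?X)))"
    using sum.remove[OF T, of t0] t0 by simp
  also have "\<dots> = \<alpha> t0 * of_nat (card (surj_homs ?X ?X))"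
    using others by (simp add: sum.neutral)
  finally have "\<alpha> t0 * of_nat (card (surj_homs ?X ?X)) = 0"
    using sum_surj_homs_eq_0[OF graphs _ zero] simple t0 by simp
  moreover have "card (surj_homs ?X ?X) \<noteq> 0"
    using restrict_id_in_surj_homs[OF X] finite_homs[OF X X]
    by (auto simp: surj_homs_def card_eq_0_iff)
  ultimately show False using t0 by simp
qed

section \<open>Disjoint unions and products\<close>

definition disjoint_union :: "graph list \<Rightarrow> graph" where
  "disjoint_union gs =
    ({prod_encode (i, v) | i v. i < length gs \<and> v \<in> verts (gs ! i)},
     {(prod_encode (i, u), prod_encode (i, v)) | i u v. i < length gs \<and> (u, v) \<in> edges (gs ! i)})"

lemma disjoint_union_verts:
    "verts (disjoint_union gs) = {prod_encode (i, v) | i v. i < length gs \<and> v \<in> verts (gs ! i)}"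
  and disjoint_union_edges: "edges (disjoint_union gs) =
    {(prod_encode (i, u), prod_encode (i, v)) | i u v. i < length gs \<and> (u, v) \<in> edges (gs ! i)}"
  by (simp_all add: disjoint_union_def verts_def edges_def)

lemma disjoint_union_simple:
  assumes "\<forall>g\<in>set gs. simple_graph g"
  shows "simple_graph (disjoint_union gs)"
proof -
  have gs: "\<forall>g\<in>set gs. is_graph g" using assms by (simp add: simple_graph_is_graph)
  have "verts (disjoint_union gs) = (\<lambda>(i, v). prod_encode (i, v)) ` (SIGMA i:{..<length gs}. verts (gs ! i))"
    by (auto simp: disjoint_union_verts)
  moreover have "finite (SIGMA i:{..<length gs}. verts (gs ! i))"
    using gs by (intro finite_SigmaI) (auto intro: is_graph_finite_verts)
  ultimately have "finite (verts (disjoint_union gs))" by simp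
  moreover have "edges (disjoint_union gs) \<subseteq> verts (disjoint_union gs) \<times> verts (disjoint_union gs)"
    using gs by (force simp: disjoint_union_verts disjoint_union_edges dest: is_graph_edgeD)
  moreover have "sym (edges (disjoint_union gs))"
    using gs by (force simp: disjoint_union_edges sym_def dest: is_graph_edge_sym)
  moreover have "(v, v) \<notin> edges (disjoint_union gs)" for v
    using assms by (auto simp: disjoint_union_edges simple_graph_def)
  ultimately show ?thesis by (simp add: simple_graph_def is_graph_def)
qed

lemma hom_connected_into_one_summand:
  assumes C: "is_graph C" "connected_graph C" and g: "g \<in> homs C (disjoint_union gs)"
    and c: "c \<in> verts C" and x: "x \<in> verts C"
  shows "fst (prod_decode (g x)) = fst (prod_decode (g c))
    \<and> fst (prod_decode (g c)) < length gs \<and> snd (prod_decode (g x)) \<in> verts (gs ! fst (prod_decode (g c)))"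
proof -
  have "(c, x) \<in> (edges C)\<^sup>*" using C(2) c x by (simp add: connected_graph_def)
  then have "fst (prod_decode (g x)) = fst (prod_decode (g c))"
  proof (induction rule: rtrancl_induct)
    case (step y z)
    have "(g y, g z) \<in> edges (disjoint_union gs)" using g step(2) by (auto simp: homs_def)
    then show ?case using step(3) by (auto simp: disjoint_union_edges)
  qed simp
  moreover have "g x \<in> verts (disjoint_union gs)" using g x by (auto simp: homs_def)
  ultimately show ?thesis by (auto simp: disjoint_union_verts)
qed

lemma hom_connected_disjoint_union:
  assumes C: "is_graph C" "connected_graph C" and gs: "\<forall>g\<in>set gs. is_graph g"
  shows "hom C (disjoint_union gs) = (\<Sum>g\<leftarrow>gs. hom C g)"
proof -
  let ?U = "disjoint_union gs"
  let ?Sig = "SIGMA i:{..<length gs}. homs C (gs ! i)"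
  let ?tag = "\<lambda>(i, h). restrict (\<lambda>x. prod_encode (i, h x)) (verts C)"
  obtain c where c: "c \<in> verts C" using C(2) by (auto simp: connected_graph_def)
  let ?untag = "\<lambda>g. (fst (prod_decode (g c)), restrict (\<lambda>x. snd (prod_decode (g x))) (verts C))"
  note block = hom_connected_into_one_summand[OF C _ c]
  have "bij_betw ?tag ?Sig (homs C ?U)"
  proof (rule bij_betw_byWitness[where f' = ?untag])
    show "\<forall>p\<in>?Sig. ?untag (?tag p) = p"
      using c by (auto simp: fun_eq_iff homs_extensional)
    show "\<forall>g\<in>homs C ?U. ?tag (?untag g) = g"
    proof (intro ballI ext)
      fix g x assume g: "g \<in> homs C ?U"
      show "?tag (?untag g) x = g x"
      proof (cases "x \<in> verts C")
        case True
        then have "prod_encode (fst (prod_decode (g c)), snd (prod_decode (g x))) = g x"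
          using block[OF g True] by (metis prod.collapse prod_decode_inverse)
        with True show ?thesis by simp
      qed (simp add: homs_extensional[OF g])
    qed
    show "?tag ` ?Sig \<subseteq> homs C ?U"
      by (force simp: homs_def disjoint_union_verts disjoint_union_edges dest: is_graph_edgeD[OF C(1)])
    show "?untag ` homs C ?U \<subseteq> ?Sig"
    proof (rule image_subsetI)
      fix g assume g: "g \<in> homs C ?U"
      let ?i = "fst (prod_decode (g c))"
      have "(\<lambda>x\<in>verts C. snd (prod_decode (g x))) \<in> homs C (gs ! ?i)"
      proof -
        have "(snd (prod_decode (g u)), snd (prod_decode (g v))) \<in> edges (gs ! ?i)"
          if uv: "(u, v) \<in> edges C" for u v
        proof -
          have "(g u, g v) \<in> edges ?U" using g uv by (auto simp: homs_def)
          moreover have "fst (prod_decode (g u)) = ?i"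
            using block[OF g] is_graph_edgeD[OF C(1) uv] by blast
          ultimately show ?thesis by (auto simp: disjoint_union_edges)
        qed
        then show ?thesis using block[OF g] is_graph_edgeD[OF C(1)] by (auto simp: homs_def)
      qed
      then show "?untag g \<in> ?Sig" using block[OF g c] by simp
    qed
  qed
  then have "hom C ?U = card ?Sig" unfolding hom_def by (rule bij_betw_same_card[symmetric])
  also have "\<dots> = (\<Sum>i<length gs. hom C (gs ! i))"
    using C gs by (subst card_SigmaI) (auto simp: hom_def intro!: finite_homs)
  also have "\<dots> = (\<Sum>g\<leftarrow>gs. hom C g)"
    by (simp add: sum_list_sum_nth atLeast0LessThan)
  finally show ?thesis .
qed

lemma exists_disjoint_union_multiplicities:
  assumes "finite \<G>" "\<forall>G\<in>\<G>. simple_graph G"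
  shows "\<exists>Y. simple_graph Y \<and>
    (\<forall>C. is_graph C \<longrightarrow> connected_graph C \<longrightarrow> hom C Y = (\<Sum>G\<in>\<G>. \<mu> G * hom C G))"
proof -
  obtain xs where xs: "set xs = \<G>" "distinct xs" using finite_distinct_list[OF assms(1)] by blast
  let ?gs = "concat (map (\<lambda>G. replicate (\<mu> G) G) xs)"
  have simple_gs: "\<forall>g\<in>set ?gs. simple_graph g" using assms xs by auto
  moreover have "hom C (disjoint_union ?gs) = (\<Sum>G\<in>\<G>. \<mu> G * hom C G)"
    if "is_graph C" "connected_graph C" for C
  proof -
    have "hom C (disjoint_union ?gs) = (\<Sum>g\<leftarrow>?gs. hom C g)"
      using hom_connected_disjoint_union[OF that] simple_gs simple_graph_is_graph by blast
    also have "\<dots> = (\<Sum>G\<leftarrow>xs. \<mu> G * hom C G)"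
      by (induction xs) (auto simp: sum_list_replicate)
    also have "\<dots> = (\<Sum>G\<in>\<G>. \<mu> G * hom C G)" using xs by (simp add: sum_list_distinct_conv_sum_set)
    finally show ?thesis .
  qed
  ultimately show ?thesis using disjoint_union_simple by blast
qed

definition graph_product :: "graph \<Rightarrow> graph \<Rightarrow> graph" where
  "graph_product G L =
    ({prod_encode (u, v) | u v. u \<in> verts G \<and> v \<in> verts L},
     {(prod_encode (u, v), prod_encode (u', v')) | u v u' v'. (u, u') \<in> edges G \<and> (v, v') \<in> edges L})"

lemma graph_product_verts:
    "verts (graph_product G L) = {prod_encode (u, v) | u v. u \<in> verts G \<and> v \<in> verts L}"
  and graph_product_edges: "edges (graph_product G L) =
    {(prod_encode (u, v), prod_encode (u', v')) | u v u' v'. (u, u') \<in> edges G \<and> (v, v') \<in> edges L}"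
  by (simp_all add: graph_product_def verts_def edges_def)

lemma graph_product_simple:
  assumes G: "simple_graph G" and L: "is_graph L"
  shows "simple_graph (graph_product G L)"
proof -
  have G': "is_graph G" using G by (rule simple_graph_is_graph)
  have "verts (graph_product G L) = (\<lambda>(u, v). prod_encode (u, v)) ` (verts G \<times> verts L)"
    by (auto simp: graph_product_verts)
  then have "finite (verts (graph_product G L))"
    using G' L by (simp add: is_graph_finite_verts)
  moreover have "edges (graph_product G L) \<subseteq> verts (graph_product G L) \<times> verts (graph_product G L)"
    using G' L by (force simp: graph_product_verts graph_product_edges dest: is_graph_edgeD)
  moreover have "sym (edges (graph_product G L))"
    using G' L by (force simp: graph_product_edges sym_def dest: is_graph_edge_sym)
  moreover have "(x, x) \<notin> edges (graph_product G L)" for x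
    using G by (auto simp: graph_product_edges simple_graph_def)
  ultimately show ?thesis by (simp add: simple_graph_def is_graph_def)
qed

lemma hom_graph_product:
  assumes F: "is_graph F" and G: "is_graph G" and L: "is_graph L"
  shows "hom F (graph_product G L) = hom F G * hom F L"
proof -
  let ?pair = "\<lambda>(a, b). restrict (\<lambda>x. prod_encode (a x, b x)) (verts F)"
  let ?unpair = "\<lambda>g. (restrict (\<lambda>x. fst (prod_decode (g x))) (verts F),
                        restrict (\<lambda>x. snd (prod_decode (g x))) (verts F))"
  have "bij_betw ?pair (homs F G \<times> homs F L) (homs F (graph_product G L))"
  proof (rule bij_betw_byWitness[where f' = ?unpair])
    show "\<forall>p\<in>homs F G \<times> homs F L. ?unpair (?pair p) = p"
      by (auto simp: fun_eq_iff homs_extensional)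
    show "\<forall>g\<in>homs F (graph_product G L). ?pair (?unpair g) = g"
      by (auto simp: fun_eq_iff homs_extensional)
    show "?pair ` (homs F G \<times> homs F L) \<subseteq> homs F (graph_product G L)"
      by (force simp: homs_def graph_product_verts graph_product_edges dest: is_graph_edgeD[OF F])
    show "?unpair ` homs F (graph_product G L) \<subseteq> homs F G \<times> homs F L"
    proof (rule image_subsetI)
      fix g assume g: "g \<in> homs F (graph_product G L)"
      have "fst (prod_decode (g x)) \<in> verts G \<and> snd (prod_decode (g x)) \<in> verts L"
        if "x \<in> verts F" for x
      proof -
        have "g x \<in> verts (graph_product G L)" using g that by (auto simp: homs_def)
        then show ?thesis by (auto simp: graph_product_verts)
      qed
      moreover have "(fst (prod_decode (g x)), fst (prod_decode (g y))) \<in> edges G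
          \<and> (snd (prod_decode (g x)), snd (prod_decode (g y))) \<in> edges L"
        if "(x, y) \<in> edges F" for x y
        using g that by (auto simp: homs_def graph_product_edges)
      ultimately show "?unpair g \<in> homs F G \<times> homs F L"
        using is_graph_edgeD[OF F] by (auto simp: homs_def)
    qed
  qed
  then show ?thesis
    unfolding hom_def by (simp add: bij_betw_same_card[symmetric] card_cartesian_product)
qed

lemma sum_apply: "(\<Sum>w\<in>S. f w) t = (\<Sum>w\<in>S. f w t)"
  by (induction S rule: infinite_finite_induct) auto

context
begin

interpretation fun_vs: vector_space "\<lambda>(c::'k::field) (f::'i \<Rightarrow> 'k) t. c * f t"
  by unfold_locales (auto simp: fun_eq_iff algebra_simps)

interpretation fun_vs_pair: vector_space_pair "\<lambda>(c::'k::field) (f::'i \<Rightarrow> 'k) t. c * f t" "(*) :: 'k \<Rightarrow> 'k \<Rightarrow> 'k"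
  by unfold_locales (auto simp: algebra_simps)

lemma restricted_span_imp_comb:
  fixes v :: "'x \<Rightarrow> 'i \<Rightarrow> 'k::field" and u :: "'i \<Rightarrow> 'k"
  assumes "(\<lambda>t. if t \<in> T then u t else 0) \<in> fun_vs.span ((\<lambda>x t. if t \<in> T then v x t else 0) ` X)"
  shows "\<exists>Y c. finite Y \<and> Y \<subseteq> X \<and> (\<forall>t\<in>T. u t = (\<Sum>x\<in>Y. c x * v x t))"
proof -
  let ?on_T = "\<lambda>w t. if t \<in> T then w t else 0"
  obtain S r where S: "finite S" "S \<subseteq> (\<lambda>x. ?on_T (v x)) ` X"
    and u_eq: "?on_T u = (\<Sum>w\<in>S. (\<lambda>t. r w * w t))"
    using assms unfolding fun_vs.span_explicit by blast
  then obtain Y where Y: "Y \<subseteq> X" "inj_on (\<lambda>x. ?on_T (v x)) Y" "S = (\<lambda>x. ?on_T (v x)) ` Y"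
    by (auto simp: subset_image_inj)
  have "u t = (\<Sum>x\<in>Y. r (?on_T (v x)) * v x t)" if "t \<in> T" for t
    using fun_cong[OF u_eq, of t] that Y by (simp add: sum_apply sum.reindex)
  moreover have "finite Y" using S(1) Y by (simp add: finite_image_iff)
  ultimately show ?thesis
    using Y(1) by (intro exI[of _ Y] exI[of _ "\<lambda>x. r (?on_T (v x))"]) simp
qed

lemma separating_functional:
  fixes v :: "'x \<Rightarrow> 'i \<Rightarrow> 'k::field" and u :: "'i \<Rightarrow> 'k"
  assumes T: "finite T"
    and not_span: "\<not> (\<exists>Y c. finite Y \<and> Y \<subseteq> X \<and> (\<forall>t\<in>T. u t = (\<Sum>x\<in>Y. c x * v x t)))"
  shows "\<exists>a. (\<forall>x\<in>X. (\<Sum>t\<in>T. a t * v x t) = 0) \<and> (\<Sum>t\<in>T. a t * u t) \<noteq> 0"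
proof -
  let ?scale = "\<lambda>(c::'k) (f::'i \<Rightarrow> 'k) t. c * f t"
  let ?on_T = "\<lambda>w t. if t \<in> T then w t else 0"
  let ?V = "(\<lambda>x. ?on_T (v x)) ` X"
  have "?on_T u \<notin> fun_vs.span ?V"
    using restricted_span_imp_comb not_span by blast
  obtain B where B: "B \<subseteq> ?V" "fun_vs.independent B" "?V \<subseteq> fun_vs.span B"
    using fun_vs.maximal_independent_subset by blast
  with \<open>?on_T u \<notin> fun_vs.span ?V\<close> have u_B: "?on_T u \<notin> fun_vs.span B"
    using fun_vs.span_mono by blast
  then have "fun_vs.independent (insert (?on_T u) B)"
    using B(2) by (rule fun_vs.independent_insertI)
  then obtain g where g: "Vector_Spaces.linear ?scale (*) g"
    and g_on: "\<forall>w\<in>insert (?on_T u) B. g w = (if w = ?on_T u then 1 else 0)"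
    using fun_vs_pair.linear_independent_extend[of _ "\<lambda>w. if w = ?on_T u then 1 else 0"] by blast
  have "\<forall>w\<in>B. g w = 0" using g_on u_B fun_vs.span_base by fastforce
  then have g_span: "\<forall>w\<in>fun_vs.span B. g w = 0"
    using fun_vs_pair.linear_eq_0_on_span[OF g] by blast
  define a where "a t = g (\<lambda>s. if s = t then 1 else 0)" for t
  have g_eval: "g (?on_T w) = (\<Sum>t\<in>T. a t * w t)" for w
  proof -
    have "?on_T w = (\<Sum>t\<in>T. ?scale (w t) (\<lambda>s. if s = t then 1 else 0))"
      using T by (auto simp: fun_eq_iff sum_apply if_distrib cong: if_cong)
    then have "g (?on_T w) = (\<Sum>t\<in>T. g (?scale (w t) (\<lambda>s. if s = t then 1 else 0)))"
      by (simp only: fun_vs_pair.linear_sum[OF g])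
    also have "\<dots> = (\<Sum>t\<in>T. a t * w t)"
      unfolding a_def by (intro sum.cong refl) (simp add: fun_vs_pair.linear_scale[OF g])
    finally show ?thesis .
  qed
  have "\<forall>x\<in>X. (\<Sum>t\<in>T. a t * v x t) = 0" using g_eval g_span B(3) by (auto simp flip: g_eval)
  moreover have "(\<Sum>t\<in>T. a t * u t) \<noteq> 0" using g_eval[of u] g_on by simp
  ultimately show ?thesis by blast
qed

end

lemma common_denominator:
  fixes r :: "'i \<Rightarrow> rat"
  assumes "finite I"
  shows "\<exists>D z. 0 < D \<and> (\<forall>i\<in>I. of_nat D * r i = of_int (z i))"
proof -
  let ?num = "\<lambda>i. fst (quotient_of (r i))" and ?den = "\<lambda>i. snd (quotient_of (r i))"
  have den: "0 < ?den i" and r: "r i = of_int (?num i) / of_int (?den i)" for i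
    using quotient_of_denom_pos[OF prod.collapse[symmetric]] quotient_of_div[OF prod.collapse[symmetric]]
    by blast+
  let ?D = "\<Prod>i\<in>I. ?den i"
  have D: "0 < ?D" using den by (simp add: prod_pos)
  have "of_nat (nat ?D) * r i = of_int (?num i * (\<Prod>j\<in>I - {i}. ?den j))" if "i \<in> I" for i
  proof -
    have "of_nat (nat ?D) * r i = of_int (?den i * (\<Prod>j\<in>I - {i}. ?den j)) * r i"
      using D prod.remove[OF assms that, of ?den] by simp
    also have "\<dots> = of_int (?num i * (\<Prod>j\<in>I - {i}. ?den j))"
      using den[of i] by (subst r) (simp add: field_simps)
    finally show ?thesis .
  qed
  moreover have "0 < nat ?D" using D by simp
  ultimately show ?thesis
    by (intro exI[of _ "nat ?D"] exI[of _ "\<lambda>i. ?num i * (\<Prod>j\<in>I - {i}. ?den j)"]) simp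
qed

lemma abs_sum_mult_le:
  fixes e a :: "'i \<Rightarrow> int"
  assumes B: "0 < B" and e: "\<forall>s\<in>T. B * \<bar>e s\<bar> \<le> M" and a: "(\<Sum>s\<in>T. \<bar>a s\<bar>) \<le> B"
    and M: "0 \<le> M"
  shows "\<bar>\<Sum>s\<in>T. e s * a s\<bar> \<le> M"
proof -
  have "B * (\<Sum>s\<in>T. \<bar>e s\<bar> * \<bar>a s\<bar>) = (\<Sum>s\<in>T. (B * \<bar>e s\<bar>) * \<bar>a s\<bar>)"
    by (simp add: sum_distrib_left mult.assoc)
  also have "\<dots> \<le> (\<Sum>s\<in>T. M * \<bar>a s\<bar>)" using e by (intro sum_mono mult_right_mono) auto
  also have "\<dots> \<le> M * B" using a M by (simp add: sum_distrib_left[symmetric] mult_left_mono)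
  finally have "(\<Sum>s\<in>T. \<bar>e s\<bar> * \<bar>a s\<bar>) \<le> M" using B by (simp add: mult.commute)
  moreover have "\<bar>\<Sum>s\<in>T. e s * a s\<bar> \<le> (\<Sum>s\<in>T. \<bar>e s\<bar> * \<bar>a s\<bar>)"
    by (simp add: sum_abs[THEN order_trans] abs_mult)
  ultimately show ?thesis by linarith
qed

lemma plus_one_power_le:
  fixes N :: nat
  assumes "1 \<le> N"
  shows "(N + 1) ^ k \<le> N ^ k + 2 ^ k * N ^ (k - 1)"
proof -
  have "(N + 1) ^ k = (\<Sum>i\<le>k. (k choose i) * N ^ i)"
    using binomial[of N 1 k] by simp
  also have "\<dots> = N ^ k + (\<Sum>i<k. (k choose i) * N ^ i)"
    by (simp add: lessThan_Suc_atMost[symmetric])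
  also have "(\<Sum>i<k. (k choose i) * N ^ i) \<le> (\<Sum>i<k. (k choose i) * N ^ (k - 1))"
    using assms by (intro sum_mono mult_left_mono power_increasing) auto
  also have "\<dots> \<le> (\<Sum>i\<le>k. k choose i) * N ^ (k - 1)"
  proof -
    have "(\<Sum>i<k. k choose i) \<le> (\<Sum>i\<le>k. k choose i)" by (intro sum_mono2) auto
    then show ?thesis by (simp add: sum_distrib_right[symmetric])
  qed
  also have "\<dots> = 2 ^ k * N ^ (k - 1)" by (simp add: choose_row_sum)
  finally show ?thesis by simp
qed

lemma power_profile_bounds:
  fixes N k P m C :: nat
  assumes N: "1 \<le> N" and k: "1 \<le> k" "P \<le> k" and C: "C * m * 2 ^ k \<le> N"
  shows "m * N ^ k \<le> m * (N + 1) ^ P * N ^ (k - P)"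
    and "C * (m * (N + 1) ^ P * N ^ (k - P) - m * N ^ k) \<le> N ^ k"
proof -
  have "N ^ k = N ^ P * N ^ (k - P)" using k by (simp flip: power_add)
  also have "\<dots> \<le> (N + 1) ^ P * N ^ (k - P)" by (simp add: power_mono)
  finally show lower: "m * N ^ k \<le> m * (N + 1) ^ P * N ^ (k - P)" by (simp add: mult.assoc)
  have "(N + 1) ^ P * N ^ (k - P) \<le> (N + 1) ^ P * (N + 1) ^ (k - P)" by (simp add: power_mono)
  also have "\<dots> = (N + 1) ^ k" using k by (simp flip: power_add)
  also have "\<dots> \<le> N ^ k + 2 ^ k * N ^ (k - 1)" using N by (rule plus_one_power_le)
  finally have "m * ((N + 1) ^ P * N ^ (k - P)) \<le> m * (N ^ k + 2 ^ k * N ^ (k - 1))"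
    by (rule mult_left_mono) simp
  then have "m * (N + 1) ^ P * N ^ (k - P) - m * N ^ k \<le> m * 2 ^ k * N ^ (k - 1)"
    by (simp add: algebra_simps le_diff_conv)
  then have "C * (m * (N + 1) ^ P * N ^ (k - P) - m * N ^ k) \<le> C * m * 2 ^ k * N ^ (k - 1)"
    by (simp add: mult.assoc mult_left_mono)
  also have "\<dots> \<le> N * N ^ (k - 1)" using C by (rule mult_right_mono) simp
  also have "\<dots> = N ^ k" using k by (simp flip: power_Suc)
  finally show "C * (m * (N + 1) ^ P * N ^ (k - P) - m * N ^ k) \<le> N ^ k" .
qed

lemma real_prod_power_profiles:
  fixes N :: nat
  assumes N: "1 \<le> N" and P: "\<forall>t\<in>T. P t \<le> k"
  shows "real (\<Prod>t\<in>T. (a t * (N + 1) ^ P t * N ^ (k - P t)) ^ c t)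
    = (\<Prod>t\<in>T. real (a t * N ^ k) ^ c t) * (real (N + 1) / real N) ^ (\<Sum>t\<in>T. P t * c t)"
proof -
  let ?x = "real (N + 1) / real N"
  have each: "real (a t * (N + 1) ^ P t * N ^ (k - P t)) = real (a t * N ^ k) * ?x ^ P t"
    if "t \<in> T" for t
  proof -
    have "real N ^ k = real N ^ P t * real N ^ (k - P t)" using P that by (simp flip: power_add)
    with N show ?thesis by (simp add: field_simps)
  qed
  have "real (\<Prod>t\<in>T. (a t * (N + 1) ^ P t * N ^ (k - P t)) ^ c t)
      = (\<Prod>t\<in>T. (real (a t * N ^ k) * ?x ^ P t) ^ c t)"
    unfolding of_nat_prod of_nat_power by (intro prod.cong refl) (simp only: each)
  also have "\<dots> = (\<Prod>t\<in>T. real (a t * N ^ k) ^ c t) * ?x ^ (\<Sum>t\<in>T. P t * c t)"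
    by (simp add: power_mult_distrib prod.distrib power_sum power_mult)
  finally show ?thesis .
qed

section \<open>Realising homomorphism counts\<close>

lemma unit_vector_in_hom_span:
  fixes R :: "'i \<Rightarrow> graph"
  assumes T: "finite T" and simple: "\<forall>t\<in>T. simple_graph (R t)"
    and distinct: "\<forall>s\<in>T. \<forall>t\<in>T. iso (R s) (R t) \<longrightarrow> s = t" and s: "s \<in> T"
  shows "\<exists>\<G> e. finite \<G> \<and> \<G> \<subseteq> Collect simple_graph
    \<and> (\<forall>t\<in>T. of_bool (t = s) = (\<Sum>G\<in>\<G>. e G * of_nat (hom (R t) G) :: rat))"
proof (rule ccontr)
  assume not_span: "\<not> ?thesis"
  obtain a :: "'i \<Rightarrow> rat"
    where a0: "\<forall>G\<in>Collect simple_graph. (\<Sum>t\<in>T. a t * of_nat (hom (R t) G)) = 0"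
      and a1: "(\<Sum>t\<in>T. a t * of_bool (t = s)) \<noteq> 0"
    using separating_functional[OF T not_span] by blast
  have "\<forall>t\<in>T. a t = 0"
    using a0 by (intro hom_functions_independent[OF T simple distinct]) simp
  moreover have "(\<Sum>t\<in>T. a t * of_bool (t = s)) = a s" using T s by simp
  ultimately show False using a1 s by simp
qed

lemma integer_unit_vectors_in_hom_span:
  fixes R :: "'i \<Rightarrow> graph"
  assumes T: "finite T" and simple: "\<forall>t\<in>T. simple_graph (R t)"
    and distinct: "\<forall>s\<in>T. \<forall>t\<in>T. iso (R s) (R t) \<longrightarrow> s = t"
  shows "\<exists>D \<G> A. 0 < D \<and> finite \<G> \<and> (\<forall>G\<in>\<G>. simple_graph G)
    \<and> (\<forall>s\<in>T. \<forall>t\<in>T. int D * of_bool (t = s) = (\<Sum>G\<in>\<G>. A s G * int (hom (R t) G)))"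
proof -
  have "\<forall>s\<in>T. \<exists>\<G> e. finite \<G> \<and> \<G> \<subseteq> Collect simple_graph
      \<and> (\<forall>t\<in>T. of_bool (t = s) = (\<Sum>G\<in>\<G>. e G * of_nat (hom (R t) G) :: rat))"
    using unit_vector_in_hom_span[OF T simple distinct] by (rule ballI)
  from bchoice[OF this] obtain \<G>s where "\<forall>s\<in>T. \<exists>e. finite (\<G>s s) \<and> \<G>s s \<subseteq> Collect simple_graph
      \<and> (\<forall>t\<in>T. of_bool (t = s) = (\<Sum>G\<in>\<G>s s. e G * of_nat (hom (R t) G) :: rat))"
    by blast
  from bchoice[OF this] obtain es where \<G>s: "\<forall>s\<in>T. finite (\<G>s s) \<and> \<G>s s \<subseteq> Collect simple_graph
      \<and> (\<forall>t\<in>T. of_bool (t = s) = (\<Sum>G\<in>\<G>s s. es s G * of_nat (hom (R t) G) :: rat))"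
    by blast
  define \<G> where "\<G> = (\<Union>s\<in>T. \<G>s s)"
  define E where "E s G = (if G \<in> \<G>s s then es s G else 0)" for s G
  have \<G>: "finite \<G>" "\<forall>G\<in>\<G>. simple_graph G" using T \<G>s by (auto simp: \<G>_def)
  have E: "of_bool (t = s) = (\<Sum>G\<in>\<G>. E s G * of_nat (hom (R t) G) :: rat)"
    if "s \<in> T" "t \<in> T" for s t
  proof -
    have "(\<Sum>G\<in>\<G>. E s G * of_nat (hom (R t) G)) = (\<Sum>G\<in>\<G>s s. es s G * of_nat (hom (R t) G) :: rat)"
      using that \<G>(1) by (intro sum.mono_neutral_cong_right) (auto simp: \<G>_def E_def)
    with \<G>s that show ?thesis by simp
  qed
  obtain D z where D: "0 < D" and z: "\<forall>i\<in>T \<times> \<G>. of_nat D * case_prod E i = of_int (z i)"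
    using common_denominator[OF finite_cartesian_product[OF T \<G>(1)], where r = "case_prod E"]
    by blast
  have "int D * of_bool (t = s) = (\<Sum>G\<in>\<G>. z (s, G) * int (hom (R t) G))" if "s \<in> T" "t \<in> T" for s t
  proof (rule sym)
    have "(of_int (\<Sum>G\<in>\<G>. z (s, G) * int (hom (R t) G)) :: rat)
        = (\<Sum>G\<in>\<G>. of_nat D * E s G * of_nat (hom (R t) G))"
      using z that by (auto intro!: sum.cong)
    also have "\<dots> = of_nat D * of_bool (t = s)"
      using E[OF that] by (simp add: sum_distrib_left mult.assoc)
    also have "\<dots> = of_int (int D * of_bool (t = s))" by simp
    finally show "(\<Sum>G\<in>\<G>. z (s, G) * int (hom (R t) G)) = int D * of_bool (t = s)"
      by (simp only: of_int_eq_iff)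
  qed
  with D \<G> show ?thesis by (intro exI[of _ D] exI[of _ \<G>] exI[of _ "\<lambda>s G. z (s, G)"]) simp
qed

lemma hom_vectors_realize_cone:
  fixes R :: "'i \<Rightarrow> graph"
  assumes T: "finite T" and simple: "\<forall>t\<in>T. simple_graph (R t)"
    and connected: "\<forall>t\<in>T. connected_graph (R t)"
    and distinct: "\<forall>s\<in>T. \<forall>t\<in>T. iso (R s) (R t) \<longrightarrow> s = t"
  shows "\<exists>D m B. 0 < D \<and> (\<forall>t\<in>T. 0 < m t) \<and> 0 < B \<and>
    (\<forall>M e. (\<forall>t\<in>T. B * \<bar>e t\<bar> \<le> int M) \<longrightarrow>
       (\<exists>Y. simple_graph Y \<and> (\<forall>t\<in>T. int (hom (R t) Y) = int D * (int M * int (m t) + e t))))"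
proof -
  obtain D \<G> A where D: "0 < D" and \<G>: "finite \<G>" "\<forall>G\<in>\<G>. simple_graph G"
    and A: "\<forall>s\<in>T. \<forall>t\<in>T. int D * of_bool (t = s) = (\<Sum>G\<in>\<G>. A s G * int (hom (R t) G))"
    using integer_unit_vectors_in_hom_span[OF T simple distinct] by blast
  define m where "m t = (\<Sum>G\<in>\<G>. hom (R t) G)" for t
  define B where "B = 1 + (\<Sum>G\<in>\<G>. \<Sum>s\<in>T. \<bar>A s G\<bar>)"
  have "0 < m t" if "t \<in> T" for t
  proof (rule ccontr)
    assume "\<not> 0 < m t"
    then have "\<forall>G\<in>\<G>. hom (R t) G = 0" using \<G>(1) by (simp add: m_def)
    moreover have "int D * of_bool (t = t) = (\<Sum>G\<in>\<G>. A t G * int (hom (R t) G))"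
      using A that by blast
    ultimately show False using D by simp
  qed
  moreover have "0 < B" unfolding B_def by (simp add: add_pos_nonneg sum_nonneg)
  moreover have "\<exists>Y. simple_graph Y \<and> (\<forall>t\<in>T. int (hom (R t) Y) = int D * (int M * int (m t) + e t))"
    if small: "\<forall>t\<in>T. B * \<bar>e t\<bar> \<le> int M" for M and e :: "'i \<Rightarrow> int"
  proof -
    define \<mu> where "\<mu> G = int D * int M + (\<Sum>s\<in>T. e s * A s G)" for G
    have \<mu>_nonneg: "0 \<le> \<mu> G" if "G \<in> \<G>" for G
    proof -
      have "(\<Sum>s\<in>T. \<bar>A s G\<bar>) \<le> B"
        using member_le_sum[of G \<G> "\<lambda>G. \<Sum>s\<in>T. \<bar>A s G\<bar>"] \<G>(1) that
        by (simp add: B_def sum_nonneg)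
      with \<open>0 < B\<close> small have "\<bar>\<Sum>s\<in>T. e s * A s G\<bar> \<le> int M"
        by (rule abs_sum_mult_le) simp
      moreover have "int M \<le> int D * int M" using D by (simp add: mult_le_cancel_right1)
      ultimately show ?thesis unfolding \<mu>_def by linarith
    qed
    obtain Y where Y: "simple_graph Y"
      and hom_Y: "\<forall>C. is_graph C \<longrightarrow> connected_graph C \<longrightarrow> hom C Y = (\<Sum>G\<in>\<G>. nat (\<mu> G) * hom C G)"
      using exists_disjoint_union_multiplicities[OF \<G>, where \<mu> = "\<lambda>G. nat (\<mu> G)"] by blast
    have "int (hom (R t) Y) = int D * (int M * int (m t) + e t)" if t: "t \<in> T" for t
    proof -
      have "hom (R t) Y = (\<Sum>G\<in>\<G>. nat (\<mu> G) * hom (R t) G)"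
        using hom_Y simple connected t simple_graph_is_graph by blast
      then have "int (hom (R t) Y) = (\<Sum>G\<in>\<G>. \<mu> G * int (hom (R t) G))"
        using \<mu>_nonneg by simp
      also have "\<dots> = int D * int M * int (m t) + (\<Sum>s\<in>T. e s * (\<Sum>G\<in>\<G>. A s G * int (hom (R t) G)))"
        by (simp add: \<mu>_def m_def algebra_simps sum.distrib sum_distrib_left sum_distrib_right sum.swap[of _ T])
      also have "\<dots> = int D * (int M * int (m t) + e t)"
        using A t T by (simp add: algebra_simps sum_distrib_left[symmetric] flip: A)
      finally show ?thesis .
    qed
    with Y show ?thesis by blast
  qed
  ultimately show ?thesis using D by blast
qed

lemma hom_vectors_realize_power_profiles:
  fixes R :: "'i \<Rightarrow> graph"
  assumes T: "finite T" and simple: "\<forall>t\<in>T. simple_graph (R t)"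
    and connected: "\<forall>t\<in>T. connected_graph (R t)"
    and distinct: "\<forall>s\<in>T. \<forall>t\<in>T. iso (R s) (R t) \<longrightarrow> s = t"
  shows "\<exists>D m C. 0 < D \<and> (\<forall>t\<in>T. 0 < m t) \<and>
    (\<forall>k N P. 1 \<le> k \<longrightarrow> 1 \<le> N \<longrightarrow> C * 2 ^ k \<le> N \<longrightarrow> (\<forall>t\<in>T. P t \<le> k) \<longrightarrow>
       (\<exists>Y. simple_graph Y \<and> (\<forall>t\<in>T. hom (R t) Y = D * m t * (N + 1) ^ P t * N ^ (k - P t))))"
proof -
  obtain D m B where D: "0 < D" and m: "\<forall>t\<in>T. 0 < m t" and B: "0 < B"
    and cone: "\<forall>M e. (\<forall>t\<in>T. B * \<bar>e t\<bar> \<le> int M) \<longrightarrow>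
       (\<exists>Y. simple_graph Y \<and> (\<forall>t\<in>T. int (hom (R t) Y) = int D * (int M * int (m t) + e t)))"
    using hom_vectors_realize_cone[OF T simple connected distinct] by blast
  have realize: "\<exists>Y. simple_graph Y \<and> (\<forall>t\<in>T. hom (R t) Y = D * m t * (N + 1) ^ P t * N ^ (k - P t))"
    if k: "1 \<le> k" and N: "1 \<le> N" "nat B * (\<Sum>t\<in>T. m t) * 2 ^ k \<le> N"
      and P: "\<forall>t\<in>T. P t \<le> k" for k N P
  proof -
    let ?y = "\<lambda>t. m t * (N + 1) ^ P t * N ^ (k - P t)"
    define e where "e t = int (?y t - m t * N ^ k)" for t
    have "B * \<bar>e t\<bar> \<le> int (N ^ k)" if t: "t \<in> T" for t
    proof -
      have "nat B * m t * 2 ^ k \<le> nat B * (\<Sum>t\<in>T. m t) * 2 ^ k"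
        using member_le_sum[of t T m] T t by (intro mult_left_mono mult_right_mono) auto
      also have "\<dots> \<le> N" by (rule N(2))
      finally have "nat B * (?y t - m t * N ^ k) \<le> N ^ k"
        by (rule power_profile_bounds(2)[OF N(1) k P[rule_format, OF t]])
      then have "int (nat B * (?y t - m t * N ^ k)) \<le> int (N ^ k)" by (simp only: of_nat_le_iff)
      then show ?thesis using B by (simp add: e_def)
    qed
    then obtain Y where Y: "simple_graph Y"
      and hom_Y: "\<forall>t\<in>T. int (hom (R t) Y) = int D * (int (N ^ k) * int (m t) + e t)"
      using cone by blast
    have int_hom: "int D * (int (N ^ k) * int (m t) + e t) = int (D * m t * (N + 1) ^ P t * N ^ (k - P t))"
      if "t \<in> T" for t
    proof -
      have "m t * N ^ k \<le> ?y t"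
        using power_profile_bounds(1)[OF N(1) k P[rule_format, OF that], of 0] by simp
      then show ?thesis by (simp add: e_def algebra_simps)
    qed
    have "\<forall>t\<in>T. hom (R t) Y = D * m t * (N + 1) ^ P t * N ^ (k - P t)"
    proof
      fix t assume "t \<in> T"
      then have "int (hom (R t) Y) = int (D * m t * (N + 1) ^ P t * N ^ (k - P t))"
        using hom_Y int_hom by simp
      then show "hom (R t) Y = D * m t * (N + 1) ^ P t * N ^ (k - P t)" by (simp only: of_nat_eq_iff)
    qed
    with Y show ?thesis by blast
  qed
  with D m show ?thesis by blast
qed

lemma exists_graphs_separating_weighted_counts:
  fixes R :: "'i \<Rightarrow> graph" and b :: "'i \<Rightarrow> int"
  assumes T: "finite T" and simple: "\<forall>t\<in>T. simple_graph (R t)"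
    and connected: "\<forall>t\<in>T. connected_graph (R t)"
    and distinct: "\<forall>s\<in>T. \<forall>t\<in>T. iso (R s) (R t) \<longrightarrow> s = t"
  shows "\<exists>Y Z. simple_graph Y \<and> simple_graph Z \<and> (\<forall>c. (\<Prod>t\<in>T. hom (R t) Y ^ c t) = (\<Prod>t\<in>T. hom (R t) Z ^ c t)
    \<longleftrightarrow> (\<Sum>t\<in>T. b t * int (c t)) = 0)"
proof -
  obtain D m C where D: "0 < D" and m: "\<forall>t\<in>T. 0 < m t"
    and realize: "\<forall>k N P. 1 \<le> k \<longrightarrow> 1 \<le> N \<longrightarrow> C * 2 ^ k \<le> N \<longrightarrow> (\<forall>t\<in>T. P t \<le> k) \<longrightarrow>
       (\<exists>Y. simple_graph Y \<and> (\<forall>t\<in>T. hom (R t) Y = D * m t * (N + 1) ^ P t * N ^ (k - P t)))"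
    using hom_vectors_realize_power_profiles[OF T simple connected distinct] by blast
  define k where "k = 1 + (\<Sum>t\<in>T. nat \<bar>b t\<bar>)"
  have "1 \<le> k" by (simp add: k_def)
  have k: "nat \<bar>b t\<bar> \<le> k" if "t \<in> T" for t
    using member_le_sum[of t T "\<lambda>t. nat \<bar>b t\<bar>"] T that by (auto simp: k_def)
  have p: "\<forall>t\<in>T. nat (b t) \<le> k" using k by (metis abs_ge_self nat_mono order_trans)
  have q: "\<forall>t\<in>T. nat (- b t) \<le> k" using k by (metis abs_ge_minus_self nat_mono order_trans)
  define N where "N = C * 2 ^ k + 1"
  have N: "1 \<le> N" "C * 2 ^ k \<le> N" by (simp_all add: N_def)
  obtain Y where Y: "simple_graph Y"
    and hom_Y: "\<forall>t\<in>T. hom (R t) Y = D * m t * (N + 1) ^ nat (b t) * N ^ (k - nat (b t))"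
    using realize[rule_format, of k N "\<lambda>t. nat (b t)"] \<open>1 \<le> k\<close> N p by blast
  obtain Z where Z: "simple_graph Z"
    and hom_Z: "\<forall>t\<in>T. hom (R t) Z = D * m t * (N + 1) ^ nat (- b t) * N ^ (k - nat (- b t))"
    using realize[rule_format, of k N "\<lambda>t. nat (- b t)"] \<open>1 \<le> k\<close> N q by blast
  have "(\<Prod>t\<in>T. hom (R t) Y ^ c t) = (\<Prod>t\<in>T. hom (R t) Z ^ c t)
      \<longleftrightarrow> (\<Sum>t\<in>T. b t * int (c t)) = 0" for c :: "'i \<Rightarrow> nat"
  proof -
    let ?W = "\<Prod>t\<in>T. real (D * m t * N ^ k) ^ c t" and ?x = "real (N + 1) / real N"
    have "0 < ?W" using D m N(1) by (simp add: prod_pos)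
    have "1 < ?x" using N(1) by simp
    have "b t = int (nat (b t)) - int (nat (- b t))" for t by simp
    then have sum_b: "(\<Sum>t\<in>T. b t * int (c t))
        = int (\<Sum>t\<in>T. nat (b t) * c t) - int (\<Sum>t\<in>T. nat (- b t) * c t)"
      by (simp add: sum_subtractf[symmetric] left_diff_distrib[symmetric])
    have "(\<Prod>t\<in>T. hom (R t) Y ^ c t) = (\<Prod>t\<in>T. hom (R t) Z ^ c t)
        \<longleftrightarrow> real (\<Prod>t\<in>T. (D * m t * (N + 1) ^ nat (b t) * N ^ (k - nat (b t))) ^ c t)
          = real (\<Prod>t\<in>T. (D * m t * (N + 1) ^ nat (- b t) * N ^ (k - nat (- b t))) ^ c t)"
      using hom_Y hom_Z by (simp only: of_nat_eq_iff cong: prod.cong)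
    also have "\<dots> \<longleftrightarrow> ?W * ?x ^ (\<Sum>t\<in>T. nat (b t) * c t) = ?W * ?x ^ (\<Sum>t\<in>T. nat (- b t) * c t)"
      unfolding real_prod_power_profiles[OF N(1) p] real_prod_power_profiles[OF N(1) q] ..
    also have "\<dots> \<longleftrightarrow> (\<Sum>t\<in>T. nat (b t) * c t) = (\<Sum>t\<in>T. nat (- b t) * c t)"
      using \<open>0 < ?W\<close> power_inject_exp[OF \<open>1 < ?x\<close>] by simp
    also have "\<dots> \<longleftrightarrow> (\<Sum>t\<in>T. b t * int (c t)) = 0"
      unfolding sum_b by linarith
    finally show ?thesis .
  qed
  with Y Z show ?thesis by blast
qed

lemma exists_graphs_separating_comp_counts:
  fixes b :: "graph set \<Rightarrow> int"
  assumes T: "finite T" and types: "\<forall>t\<in>T. \<exists>X. simple_graph X \<and> t \<in> Gamma X"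
  shows "\<exists>Y Z. simple_graph Y \<and> simple_graph Z \<and> (\<forall>X. is_graph X \<longrightarrow> Gamma X \<subseteq> T \<longrightarrow>
    (hom X Y = hom X Z \<longleftrightarrow> (\<Sum>t\<in>T. b t * comp_count X t) = 0))"
proof -
  have reps: "simple_graph (type_rep t) \<and> connected_graph (type_rep t) \<and> iso_type (type_rep t) = t"
    if "t \<in> T" for t
    using types that Gamma_type_rep Gamma_type_rep_simple simple_graph_is_graph by blast
  have distinct: "\<forall>s\<in>T. \<forall>t\<in>T. iso (type_rep s) (type_rep t) \<longrightarrow> s = t"
  proof (intro ballI impI)
    fix s t assume "s \<in> T" "t \<in> T" "iso (type_rep s) (type_rep t)"
    moreover from this have "iso_type (type_rep s) = iso_type (type_rep t)" by (intro iso_type_eq)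
    ultimately show "s = t" using reps by simp
  qed
  have "\<forall>t\<in>T. simple_graph (type_rep t)" "\<forall>t\<in>T. connected_graph (type_rep t)"
    using reps by blast+
  from exists_graphs_separating_weighted_counts[OF T this distinct, where b = b]
  obtain Y Z where Y: "simple_graph Y" and Z: "simple_graph Z"
    and YZ: "\<forall>c. (\<Prod>t\<in>T. hom (type_rep t) Y ^ c t) = (\<Prod>t\<in>T. hom (type_rep t) Z ^ c t)
      \<longleftrightarrow> (\<Sum>t\<in>T. b t * int (c t)) = 0"
    by blast
  have "hom X Y = hom X Z \<longleftrightarrow> (\<Sum>t\<in>T. b t * comp_count X t) = 0"
    if "is_graph X" "Gamma X \<subseteq> T" for X
    using hom_eq_prod_types[OF that(1) _ T that(2)] YZ Y Z by (simp add: simple_graph_is_graph)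
  with Y Z show ?thesis by blast
qed

section \<open>Homomorphism distinguishing closedness\<close>

lemma not_comp_span_imp_integer_weights:
  assumes T: "finite T" and sub: "Gamma_class (\<X> \<union> {K}) \<subseteq> T" and not_span: "\<not> comp_span \<X> K"
  shows "\<exists>b::graph set \<Rightarrow> int. (\<forall>F\<in>\<X>. (\<Sum>t\<in>T. b t * comp_count F t) = 0)
    \<and> (\<Sum>t\<in>T. b t * comp_count K t) \<noteq> 0"
proof -
  let ?v = "\<lambda>F t. of_nat (comp_count F t) :: rat"
  have not_rat_span: "\<not> (\<exists>Y c. finite Y \<and> Y \<subseteq> \<X> \<and> (\<forall>t\<in>T. ?v K t = (\<Sum>F\<in>Y. c F * ?v F t)))"
  proof
    assume "\<exists>Y c. finite Y \<and> Y \<subseteq> \<X> \<and> (\<forall>t\<in>T. ?v K t = (\<Sum>F\<in>Y. c F * ?v F t))"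
    then obtain Y c where Y: "finite Y" "Y \<subseteq> \<X>" and comb: "\<forall>t\<in>T. ?v K t = (\<Sum>F\<in>Y. c F * ?v F t)"
      by blast
    have "comp_vec K t = (\<Sum>F\<in>Y. real_of_rat (c F) * comp_vec F t)" for t
    proof (cases "t \<in> T")
      case True
      then have "real_of_rat (?v K t) = real_of_rat (\<Sum>F\<in>Y. c F * ?v F t)" using comb by simp
      then show ?thesis by (simp add: comp_vec_eq of_rat_sum of_rat_mult)
    next
      case False
      then have "t \<notin> Gamma K" "\<forall>F\<in>Y. t \<notin> Gamma F"
        using sub Y(2) by (auto simp: Gamma_class_def)
      then show ?thesis by (simp add: comp_vec_eq comp_count_eq_0)
    qed
    with Y have "comp_span \<X> K"
      unfolding comp_span_def by (intro exI[of _ Y] exI[of _ "\<lambda>F. real_of_rat (c F)"]) simp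
    with not_span show False by contradiction
  qed
  obtain a where a0: "\<forall>F\<in>\<X>. (\<Sum>t\<in>T. a t * ?v F t) = 0" and a1: "(\<Sum>t\<in>T. a t * ?v K t) \<noteq> 0"
    using separating_functional[OF T not_rat_span] by blast
  obtain D b where D: "0 < D" and b: "\<forall>t\<in>T. of_nat D * a t = of_int (b t)"
    using common_denominator[OF T] by blast
  have scaled: "of_int (\<Sum>t\<in>T. b t * comp_count F t) = of_nat D * (\<Sum>t\<in>T. a t * ?v F t)" for F
  proof -
    have "of_int (\<Sum>t\<in>T. b t * comp_count F t) = (\<Sum>t\<in>T. of_int (b t) * ?v F t)" by simp
    also have "\<dots> = (\<Sum>t\<in>T. of_nat D * a t * ?v F t)" using b by (intro sum.cong) auto
    finally show ?thesis by (simp add: sum_distrib_left mult.assoc)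
  qed
  show ?thesis
  proof (intro exI[of _ b] conjI ballI)
    fix F assume "F \<in> \<X>"
    then have "(of_int (\<Sum>t\<in>T. b t * comp_count F t) :: rat) = 0" unfolding scaled using a0 by simp
    then show "(\<Sum>t\<in>T. b t * comp_count F t) = 0" by (metis of_int_eq_0_iff)
  next
    have "(of_int (\<Sum>t\<in>T. b t * comp_count K t) :: rat) \<noteq> 0" unfolding scaled using a1 D by simp
    then show "(\<Sum>t\<in>T. b t * comp_count K t) \<noteq> 0" by (metis of_int_0)
  qed
qed

lemma not_comp_span_imp_not_hd_cl:
  assumes simple: "\<forall>F\<in>\<F>. simple_graph F" and L: "simple_graph L"
    and T: "finite (Gamma_class (restrict_to \<F> L \<union> {L}))"
    and not_span: "\<not> comp_span (restrict_to \<F> L) L"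
  shows "L \<notin> hd_cl \<F>"
proof
  assume L_cl: "L \<in> hd_cl \<F>"
  let ?FL = "restrict_to \<F> L"
  let ?T = "Gamma_class (?FL \<union> {L})"
  have L': "is_graph L" using L by (rule simple_graph_is_graph)
  have FL: "\<forall>F\<in>?FL. simple_graph F \<and> 0 < hom F L" using simple by (simp add: restrict_to_def)
  obtain b :: "graph set \<Rightarrow> int" where b_FL: "\<forall>F\<in>?FL. (\<Sum>t\<in>?T. b t * comp_count F t) = 0"
    and b_L: "(\<Sum>t\<in>?T. b t * comp_count L t) \<noteq> 0"
    using not_comp_span_imp_integer_weights[OF T order_refl not_span] by blast
  have "\<forall>t\<in>?T. \<exists>X. simple_graph X \<and> t \<in> Gamma X"
    using FL L unfolding Gamma_class_def by blast
  then obtain Y Z where Y: "simple_graph Y" and Z: "simple_graph Z"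
    and YZ: "\<forall>X. is_graph X \<longrightarrow> Gamma X \<subseteq> ?T \<longrightarrow>
      (hom X Y = hom X Z \<longleftrightarrow> (\<Sum>t\<in>?T. b t * comp_count X t) = 0)"
    using exists_graphs_separating_comp_counts[OF T, where b = b] by blast
  have Y': "is_graph Y" and Z': "is_graph Z" using Y Z by (simp_all add: simple_graph_is_graph)
  \<comment> \<open>The product with \<open>L\<close> makes \<open>hom F\<close> vanish for every \<open>F\<close> outside \<open>restrict_to \<F> L\<close>.\<close>
  have "hom_equiv \<F> (graph_product Y L) (graph_product Z L)"
    unfolding hom_equiv_def
  proof
    fix F assume F: "F \<in> \<F>"
    then have F': "is_graph F" using simple simple_graph_is_graph by blast
    show "hom F (graph_product Y L) = hom F (graph_product Z L)"
    proof (cases "0 < hom F L")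
      case True
      with F have "F \<in> ?FL" by (simp add: restrict_to_def)
      moreover from this have "Gamma F \<subseteq> ?T" by (auto simp: Gamma_class_def)
      ultimately have "hom F Y = hom F Z" using YZ F' b_FL by blast
      then show ?thesis by (simp add: hom_graph_product[OF F' Y' L'] hom_graph_product[OF F' Z' L'])
    qed (simp add: hom_graph_product[OF F' Y' L'] hom_graph_product[OF F' Z' L'])
  qed
  moreover have "simple_graph (graph_product Y L)" "simple_graph (graph_product Z L)"
    using graph_product_simple[OF _ L'] Y Z by blast+
  ultimately have "hom L (graph_product Y L) = hom L (graph_product Z L)"
    using L_cl unfolding hd_cl_def by blast
  then have "hom L Y = hom L Z"
    using hom_self_pos[OF L'] by (simp add: hom_graph_product[OF L' Y' L'] hom_graph_product[OF L' Z' L'])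
  moreover have "Gamma L \<subseteq> ?T" by (auto simp: Gamma_class_def)
  ultimately show False using YZ L' b_L by blast
qed

lemma subset_hd_cl: "\<forall>F\<in>\<F>. simple_graph F \<Longrightarrow> \<F> \<subseteq> hd_cl \<F>"
  by (auto simp: hd_cl_def hom_equiv_def)

lemma finite_Gamma_class_restrict_to:
  assumes "ess_profinite \<F>" "is_graph K"
  shows "finite (Gamma_class (restrict_to \<F> K \<union> {K}))"
proof -
  have "Gamma_class (restrict_to \<F> K \<union> {K}) = Gamma_class (restrict_to \<F> K) \<union> Gamma K"
    by (auto simp: Gamma_class_def)
  moreover have "finite (Gamma_class (restrict_to \<F> K))"
    using assms unfolding ess_profinite_def ess_finite_def by blast
  ultimately show ?thesis using assms(2) by (simp add: finite_Gamma)
qed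

lemma hd_closed_iff_comp_span:
  assumes simple: "\<forall>F\<in>\<F>. simple_graph F" and prof: "ess_profinite \<F>"
  shows "hd_closed \<F> \<longleftrightarrow> (\<forall>K. is_graph K \<longrightarrow> comp_span (restrict_to \<F> K) K \<longrightarrow> K \<in> \<F>)"
proof
  assume "hd_closed \<F>"
  then show "\<forall>K. is_graph K \<longrightarrow> comp_span (restrict_to \<F> K) K \<longrightarrow> K \<in> \<F>"
    using comp_span_imp_hd_cl[OF simple] by (simp add: hd_closed_def)
next
  assume span: "\<forall>K. is_graph K \<longrightarrow> comp_span (restrict_to \<F> K) K \<longrightarrow> K \<in> \<F>"
  have "L \<in> \<F>" if L: "L \<in> hd_cl \<F>" for L
  proof (rule ccontr)
    assume "L \<notin> \<F>"
    have "simple_graph L" using L by (simp add: hd_cl_def)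
    then have L': "is_graph L" by (rule simple_graph_is_graph)
    with \<open>L \<notin> \<F>\<close> span have "\<not> comp_span (restrict_to \<F> L) L" by blast
    with L show False
      using not_comp_span_imp_not_hd_cl[OF simple \<open>simple_graph L\<close>] finite_Gamma_class_restrict_to[OF prof L']
      by blast
  qed
  with subset_hd_cl[OF simple] show "hd_closed \<F>" by (auto simp: hd_closed_def)
qed

lemma ess_profinite_restrict_to:
  assumes "ess_profinite \<F>"
  shows "ess_profinite (restrict_to \<F> K)"
  unfolding ess_profinite_def ess_finite_def
proof (intro allI impI)
  fix K' assume "is_graph K'"
  then have "finite (Gamma_class (restrict_to \<F> K'))"
    using assms unfolding ess_profinite_def ess_finite_def by blast
  moreover have "Gamma_class (restrict_to (restrict_to \<F> K) K') \<subseteq> Gamma_class (restrict_to \<F> K')"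
    by (auto simp: Gamma_class_def restrict_to_def)
  ultimately show "finite (Gamma_class (restrict_to (restrict_to \<F> K) K'))"
    by (rule finite_subset[rotated])
qed

lemma hd_closed_restrict_to:
  assumes simple: "\<forall>F\<in>\<F>. simple_graph F" and prof: "ess_profinite \<F>"
    and closed: "hd_closed \<F>" and K: "is_graph K"
  shows "hd_closed (restrict_to \<F> K)"
proof -
  let ?FK = "restrict_to \<F> K"
  have simple_FK: "\<forall>F\<in>?FK. simple_graph F" using simple by (simp add: restrict_to_def)
  have "K' \<in> ?FK" if K': "is_graph K'" and span: "comp_span (restrict_to ?FK K') K'" for K'
  proof -
    have "restrict_to ?FK K' \<subseteq> restrict_to \<F> K'" by (auto simp: restrict_to_def)
    with span have "comp_span (restrict_to \<F> K') K'" by (auto simp: comp_span_def)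
    then have "K' \<in> \<F>" using closed K' hd_closed_iff_comp_span[OF simple prof] by blast
    moreover have "0 < hom K' K"
    proof (rule hom_pos_if_Gamma_subset[OF K' K])
      show "Gamma K' \<subseteq> Gamma_class (restrict_to ?FK K')" by (rule comp_span_Gamma_subset[OF K' span])
      show "\<forall>F\<in>restrict_to ?FK K'. is_graph F \<and> 0 < hom F K"
        using simple_FK by (simp add: restrict_to_def simple_graph_is_graph)
    qed
    ultimately show ?thesis by (simp add: restrict_to_def)
  qed
  then show ?thesis
    using hd_closed_iff_comp_span[OF simple_FK ess_profinite_restrict_to[OF prof]] by blast
qed

lemma restrict_to_loop:
  assumes "\<forall>F\<in>\<F>. is_graph F"
  shows "restrict_to \<F> ({0}, {(0, 0)}) = \<F>"
proof -
  have "0 < hom F ({0}, {(0, 0)})" if "is_graph F" for F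
  proof -
    have "(\<lambda>v\<in>verts F. 0) \<in> homs F ({0}, {(0, 0)})"
      using that by (auto simp: homs_def verts_def edges_def dest: is_graph_edgeD)
    then show ?thesis using that by (auto simp: hom_pos_iff is_graph_def verts_def edges_def sym_def)
  qed
  with assms show ?thesis by (auto simp: restrict_to_def)
qed

theorem theorem27:
  fixes \<F> :: "graph set"
  assumes simple: "\<forall>F\<in>\<F>. simple_graph F"
    and closed_iso: "iso_closed \<F>"
    and prof: "ess_profinite \<F>"
  shows "(hd_closed \<F> \<longleftrightarrow>
          (\<forall>K. is_graph K \<longrightarrow>
             in_span_on (Gamma_class (restrict_to \<F> K \<union> {K}))
               (comp_vec ` restrict_to \<F> K) (comp_vec K) \<longrightarrow> K \<in> \<F>))
       \<and> (hd_closed \<F> \<longleftrightarrow> (\<forall>K. is_graph K \<longrightarrow> hd_closed (restrict_to \<F> K)))"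
proof
  show "hd_closed \<F> \<longleftrightarrow> (\<forall>K. is_graph K \<longrightarrow>
      in_span_on (Gamma_class (restrict_to \<F> K \<union> {K})) (comp_vec ` restrict_to \<F> K) (comp_vec K)
        \<longrightarrow> K \<in> \<F>)"
    unfolding in_span_on_Gamma_class_iff by (rule hd_closed_iff_comp_span[OF simple prof])
  have loop: "is_graph ({0}, {(0, 0)})" by (simp add: is_graph_def verts_def edges_def sym_def)
  have "restrict_to \<F> ({0}, {(0, 0)}) = \<F>"
    using simple by (intro restrict_to_loop) (simp add: simple_graph_is_graph)
  then show "hd_closed \<F> \<longleftrightarrow> (\<forall>K. is_graph K \<longrightarrow> hd_closed (restrict_to \<F> K))"
    using hd_closed_restrict_to[OF simple prof] loop by metis
qed

end
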